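(* There is an absolute constant $c>0$ such that the following holds for every graph $G$, label set $\chi$ with $d\ge2$, cost vector $C$ and $\epsilon>0$. Set $\eta=\frac{4(m+n)\log d}{\epsilon}$ and let $K\ge c\, m d^2(m+n)^4\|C\|_\infty^3\epsilon^{-3}\log d$. Let $\hat\lambda$ be the output of the randomized message passing procedure run for $K$ iterations with the EMP update and block distribution uniform over $\{(e,i):e\in E,i\in e\}$, and let $\hat\mu=\mathrm{Proj}(\mu^{\hat\lambda})$. Then $\hat\mu\in\mathbb{L}_2$ and $$\mathbb{E}\,\langle C,\hat\mu\rangle\le\min_{\mu\in\mathbb{L}_2}\langle C,\mu\rangle+\epsilon.$$ The same conclusion holds if instead the procedure uses the SMP update with vertex $i$ sampled with probability $p_i=|N_i|/\sum_{j\in V}|N_j|$.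
   Context: Let $G=(V,E)$ be a finite undirected graph with $n=|V|$, $m=|E|$, every vertex incident to at least one edge; $N_i=\{e\in E:i\in e\}$. $\chi$ is a finite label set with $d=|\chi|\ge2$. Costs $C_i\in\mathbb{R}^\chi$, $C_e\in\mathbb{R}^{\chi^2}$; $\|C\|_\infty$ is the largest absolute entry; for $e=\{i,j\}$ (with a fixed orientation), $x_e=(x_i,x_j)$ and $(x_e)_i=x_i$. $\langle C,\mu\rangle=\sum_i\sum_xC_i(x)\mu_i(x)+\sum_e\sum_{x_e}C_e(x_e)\mu_e(x_e)$. $\mathbb{L}_2=\{\mu\ge0:\mu_i\in\Sigma^d\ \forall i,\ \sum_{x_e:(x_e)_i=x}\mu_e(x_e)=\mu_i(x)\ \forall e,\,i\in e,\,x\}$, with $\Sigma^d$ the probability simplex on $\chi$. Dual variables $\lambda\in\mathbb{R}^{2md}$ indexed by $(e,i,x)$, $e\in E$, $i\in e$, $x\in\chi$. $\mu^\lambda_i(x)\propto\exp(-\eta C_i(x)+\eta\sum_{e\in N_i}\lambda_{e,i}(x))$, $\mu^\lambda_e(x_e)\propto\exp(-\eta C_e(x_e)-\eta\sum_{i\in e}\lambda_{e,i}((x_e)_i))$, each normalized to sum to $1$; $S^\lambda_{e,i}(x)=\sum_{x_e:(x_e)_i=x}\mu^\lambda_e(x_e)$; slack $\nu^\lambda_{e,i}=S^\lambda_{e,i}-\mu^\lambda_i$. EMP update at block $(e,i)$: replace $\lambda_{e,i}(x)$ by $\lambda_{e,i}(x)+\frac{1}{2\eta}\log(S^\lambda_{e,i}(x)/\mu^\lambda_i(x))$.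 SMP update at vertex $i$: for each $e\in N_i$ replace $\lambda_{e,i}(x)$ by $\lambda_{e,i}(x)+\frac1\eta\log S^\lambda_{e,i}(x)-\frac{1}{\eta(|N_i|+1)}\log(\mu^\lambda_i(x)\prod_{e'\in N_i}S^\lambda_{e',i}(x))$. Randomized message passing procedure: $\lambda^{(0)}=0$; for $k=0,\dots,K-1$, sample a block $b_k$ independently from the given distribution and let $\lambda^{(k+1)}$ be $\lambda^{(k)}$ with block $b_k$ updated by the update rule evaluated at $\lambda^{(k)}$; output $\hat\lambda\in\arg\min_{\lambda\in\{\lambda^{(0)},\dots,\lambda^{(K)}\}}\sum_{e\in E,i\in e}\|\nu^\lambda_{e,i}\|_1^2$. Rounding map: for $F\in\mathbb{R}_{>0}^{\chi\times\chi}$ and $r,c\in\Sigma^d$, with $r(F),c(F)$ the row/column sums, let $F'=\mathrm{diag}(a)F$ with $a(x)=\min\{r(x)/r(F)(x),1\}$, $F''=F'\mathrm{diag}(b)$ with $b(x)=\min\{c(x)/c(F')(x),1\}$, $\mathrm{err}_r=r-r(F'')$, $\mathrm{err}_c=c-c(F'')$, and output $F''+\mathrm{err}_r\mathrm{err}_c^\top/\|\mathrm{err}_c\|_1$ (or $F''$ if $\mathrm{err}_c=0$). $\mathrm{Proj}(\mu^\lambda)$ is the vector $\hat\mu$ with $\hat\mu_i=\mu^\lambda_i$ for $i\in V$ and, for $e=\{i,j\}$, $\hat\mu_e$ the rounding of $\mu^\lambda_e$ (rows indexed by $x_i$, columns by $x_j$) with $r=\mu^\lambda_i$, $c=\mu^\lambda_j$.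 Expectation is over the random block choices. *)

theory Defs
  imports "HOL-Probability.Probability"
begin

text \<open>Vertices and labels are natural numbers (concrete types, so that the
constant c in the main theorem is genuinely absolute). V is the vertex set, X the label
set chi (d = card X), and E the set of edges, each undirected edge {i,j} stored once with
a fixed orientation as a pair (i,j). Dual variables lam e i x are indexed by an edge,
one of its endpoints, and a label.\<close>

type_synonym edge = "nat \<times> nat"
type_synonym dual = "edge \<Rightarrow> nat \<Rightarrow> nat \<Rightarrow> real"

definition ends :: "edge \<Rightarrow> nat set" where
  "ends e = {fst e, snd e}"

definition nbr :: "edge set \<Rightarrow> nat \<Rightarrow> edge set" where
  "nbr E i = {e \<in> E. i \<in> ends e}"

definition graph :: "nat set \<Rightarrow> edge set \<Rightarrow> bool" where
  "graph V E \<longleftrightarrow> finite V \<and> V \<noteq> {} \<and> finite E \<and> E \<subseteq> V \<times> V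
     \<and> (\<forall>e\<in>E. fst e \<noteq> snd e) \<and> (\<forall>a b. (a, b) \<in> E \<longrightarrow> (b, a) \<notin> E)
     \<and> (\<forall>i\<in>V. nbr E i \<noteq> {})"

definition Cnorm :: "nat set \<Rightarrow> edge set \<Rightarrow> nat set \<Rightarrow> (nat \<Rightarrow> nat \<Rightarrow> real)
    \<Rightarrow> (edge \<Rightarrow> nat \<Rightarrow> nat \<Rightarrow> real) \<Rightarrow> real" where
  "Cnorm V E X Cv Ce = Max ({\<bar>Cv i x\<bar> | i x. i \<in> V \<and> x \<in> X}
                            \<union> {\<bar>Ce e x y\<bar> | e x y. e \<in> E \<and> x \<in> X \<and> y \<in> X})"

definition wV :: "edge set \<Rightarrow> (nat \<Rightarrow> nat \<Rightarrow> real) \<Rightarrow> real \<Rightarrow> dual \<Rightarrow> nat \<Rightarrow> nat \<Rightarrow> real" where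
  "wV E Cv \<eta> lam i x = exp (- \<eta> * Cv i x + \<eta> * (\<Sum>e\<in>nbr E i. lam e i x))"

definition muV :: "edge set \<Rightarrow> nat set \<Rightarrow> (nat \<Rightarrow> nat \<Rightarrow> real) \<Rightarrow> real \<Rightarrow> dual \<Rightarrow> nat \<Rightarrow> nat \<Rightarrow> real" where
  "muV E X Cv \<eta> lam i x = wV E Cv \<eta> lam i x / (\<Sum>y\<in>X. wV E Cv \<eta> lam i y)"

definition wE :: "(edge \<Rightarrow> nat \<Rightarrow> nat \<Rightarrow> real) \<Rightarrow> real \<Rightarrow> dual \<Rightarrow> edge \<Rightarrow> nat \<Rightarrow> nat \<Rightarrow> real" where
  "wE Ce \<eta> lam e x y = exp (- \<eta> * Ce e x y - \<eta> * (lam e (fst e) x + lam e (snd e) y))"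

text \<open>muE lam e x y: rows indexed by the label of fst e, columns by the label of snd e.\<close>
definition muE :: "nat set \<Rightarrow> (edge \<Rightarrow> nat \<Rightarrow> nat \<Rightarrow> real) \<Rightarrow> real \<Rightarrow> dual \<Rightarrow> edge \<Rightarrow> nat \<Rightarrow> nat \<Rightarrow> real" where
  "muE X Ce \<eta> lam e x y = wE Ce \<eta> lam e x y / (\<Sum>p\<in>X \<times> X. wE Ce \<eta> lam e (fst p) (snd p))"

definition Smarg :: "nat set \<Rightarrow> (edge \<Rightarrow> nat \<Rightarrow> nat \<Rightarrow> real) \<Rightarrow> real \<Rightarrow> dual \<Rightarrow> edge \<Rightarrow> nat \<Rightarrow> nat \<Rightarrow> real" where
  "Smarg X Ce \<eta> lam e i x =
     (if i = fst e then (\<Sum>y\<in>X. muE X Ce \<eta> lam e x y) else (\<Sum>y\<in>X. muE X Ce \<eta> lam e y x))"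

definition slack :: "edge set \<Rightarrow> nat set \<Rightarrow> (nat \<Rightarrow> nat \<Rightarrow> real) \<Rightarrow> (edge \<Rightarrow> nat \<Rightarrow> nat \<Rightarrow> real)
    \<Rightarrow> real \<Rightarrow> dual \<Rightarrow> edge \<Rightarrow> nat \<Rightarrow> nat \<Rightarrow> real" where
  "slack E X Cv Ce \<eta> lam e i x = Smarg X Ce \<eta> lam e i x - muV E X Cv \<eta> lam i x"

definition slack_obj :: "edge set \<Rightarrow> nat set \<Rightarrow> (nat \<Rightarrow> nat \<Rightarrow> real) \<Rightarrow> (edge \<Rightarrow> nat \<Rightarrow> nat \<Rightarrow> real)
    \<Rightarrow> real \<Rightarrow> dual \<Rightarrow> real" where
  "slack_obj E X Cv Ce \<eta> lam =
     (\<Sum>e\<in>E. \<Sum>i\<in>ends e. (\<Sum>x\<in>X. \<bar>slack E X Cv Ce \<eta> lam e i x\<bar>)\<^sup>2)"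

definition emp_update :: "edge set \<Rightarrow> nat set \<Rightarrow> (nat \<Rightarrow> nat \<Rightarrow> real) \<Rightarrow> (edge \<Rightarrow> nat \<Rightarrow> nat \<Rightarrow> real)
    \<Rightarrow> real \<Rightarrow> edge \<times> nat \<Rightarrow> dual \<Rightarrow> dual" where
  "emp_update E X Cv Ce \<eta> b lam =
     (let e = fst b; i = snd b in
      lam(e := (lam e)(i := (\<lambda>x. lam e i x
          + 1 / (2 * \<eta>) * ln (Smarg X Ce \<eta> lam e i x / muV E X Cv \<eta> lam i x)))))"

definition smp_update :: "edge set \<Rightarrow> nat set \<Rightarrow> (nat \<Rightarrow> nat \<Rightarrow> real) \<Rightarrow> (edge \<Rightarrow> nat \<Rightarrow> nat \<Rightarrow> real)
    \<Rightarrow> real \<Rightarrow> nat \<Rightarrow> dual \<Rightarrow> dual" where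
  "smp_update E X Cv Ce \<eta> i lam =
     (\<lambda>e j x. if e \<in> nbr E i \<and> j = i
        then lam e i x + 1 / \<eta> * ln (Smarg X Ce \<eta> lam e i x)
             - 1 / (\<eta> * (real (card (nbr E i)) + 1))
               * ln (muV E X Cv \<eta> lam i x * (\<Prod>e'\<in>nbr E i. Smarg X Ce \<eta> lam e' i x))
        else lam e j x)"

definition run :: "('b \<Rightarrow> dual \<Rightarrow> dual) \<Rightarrow> 'b list \<Rightarrow> nat \<Rightarrow> dual" where
  "run upd bs k = foldl (\<lambda>lam b. upd b lam) (\<lambda>_ _ _. 0) (take k bs)"

fun seq_pmf :: "nat \<Rightarrow> 'b pmf \<Rightarrow> 'b list pmf" where
  "seq_pmf 0 p = return_pmf []"
| "seq_pmf (Suc k) p = bind_pmf p (\<lambda>b. map_pmf (\<lambda>bs. b # bs) (seq_pmf k p))"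

definition round_map :: "nat set \<Rightarrow> (nat \<Rightarrow> nat \<Rightarrow> real) \<Rightarrow> (nat \<Rightarrow> real) \<Rightarrow> (nat \<Rightarrow> real)
    \<Rightarrow> nat \<Rightarrow> nat \<Rightarrow> real" where
  "round_map X F r c =
    (let a = (\<lambda>x. min (r x / (\<Sum>y\<in>X. F x y)) 1);
         F1 = (\<lambda>x y. a x * F x y);
         b = (\<lambda>y. min (c y / (\<Sum>x\<in>X. F1 x y)) 1);
         F2 = (\<lambda>x y. F1 x y * b y);
         err_r = (\<lambda>x. r x - (\<Sum>y\<in>X. F2 x y));
         err_c = (\<lambda>y. c y - (\<Sum>x\<in>X. F2 x y))
     in if (\<forall>y\<in>X. err_c y = 0) then F2
        else (\<lambda>x y. F2 x y + err_r x * err_c y / (\<Sum>z\<in>X. \<bar>err_c z\<bar>)))"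

type_synonym pseudo = "(nat \<Rightarrow> nat \<Rightarrow> real) \<times> (edge \<Rightarrow> nat \<Rightarrow> nat \<Rightarrow> real)"

definition Proj :: "edge set \<Rightarrow> nat set \<Rightarrow> (nat \<Rightarrow> nat \<Rightarrow> real) \<Rightarrow> (edge \<Rightarrow> nat \<Rightarrow> nat \<Rightarrow> real)
    \<Rightarrow> real \<Rightarrow> dual \<Rightarrow> pseudo" where
  "Proj E X Cv Ce \<eta> lam =
     (muV E X Cv \<eta> lam,
      \<lambda>e. round_map X (muE X Ce \<eta> lam e) (muV E X Cv \<eta> lam (fst e)) (muV E X Cv \<eta> lam (snd e)))"

text \<open>Local marginal polytope L_2 (only the values on V, E, X are constrained).\<close>
definition L2 :: "nat set \<Rightarrow> edge set \<Rightarrow> nat set \<Rightarrow> pseudo set" where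
  "L2 V E X = {(mv, me).
      (\<forall>i\<in>V. \<forall>x\<in>X. mv i x \<ge> 0) \<and> (\<forall>e\<in>E. \<forall>x\<in>X. \<forall>y\<in>X. me e x y \<ge> 0)
    \<and> (\<forall>i\<in>V. (\<Sum>x\<in>X. mv i x) = 1)
    \<and> (\<forall>e\<in>E. \<forall>x\<in>X. (\<Sum>y\<in>X. me e x y) = mv (fst e) x)
    \<and> (\<forall>e\<in>E. \<forall>y\<in>X. (\<Sum>x\<in>X. me e x y) = mv (snd e) y)}"

definition cost :: "nat set \<Rightarrow> edge set \<Rightarrow> nat set \<Rightarrow> (nat \<Rightarrow> nat \<Rightarrow> real) \<Rightarrow> (edge \<Rightarrow> nat \<Rightarrow> nat \<Rightarrow> real)
    \<Rightarrow> pseudo \<Rightarrow> real" where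
  "cost V E X Cv Ce mu =
     (\<Sum>i\<in>V. \<Sum>x\<in>X. Cv i x * fst mu i x) + (\<Sum>e\<in>E. \<Sum>x\<in>X. \<Sum>y\<in>X. Ce e x y * snd mu e x y)"

definition emp_blocks :: "edge set \<Rightarrow> (edge \<times> nat) pmf" where
  "emp_blocks E = pmf_of_set {(e, i). e \<in> E \<and> i \<in> ends e}"

definition smp_blocks :: "nat set \<Rightarrow> edge set \<Rightarrow> nat pmf" where
  "smp_blocks V E = embed_pmf (\<lambda>i. if i \<in> V
       then real (card (nbr E i)) / (\<Sum>j\<in>V. real (card (nbr E j))) else 0)"

text \<open>Guarantee for the randomized procedure with update upd and block distribution p,
run for K iterations, for every admissible argmin selection sel.\<close>
definition rmp_guarantee :: "nat set \<Rightarrow> edge set \<Rightarrow> nat set \<Rightarrow> (nat \<Rightarrow> nat \<Rightarrow> real)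
    \<Rightarrow> (edge \<Rightarrow> nat \<Rightarrow> nat \<Rightarrow> real) \<Rightarrow> real \<Rightarrow> real \<Rightarrow> nat
    \<Rightarrow> ('b \<Rightarrow> dual \<Rightarrow> dual) \<Rightarrow> 'b pmf \<Rightarrow> bool" where
  "rmp_guarantee V E X Cv Ce \<eta> \<epsilon> K upd p \<longleftrightarrow>
     (\<forall>sel :: 'b list \<Rightarrow> nat.
        (\<forall>bs. sel bs \<le> K \<and> (\<forall>k\<le>K. slack_obj E X Cv Ce \<eta> (run upd bs (sel bs))
                                     \<le> slack_obj E X Cv Ce \<eta> (run upd bs k)))
        \<longrightarrow> (\<forall>bs\<in>set_pmf (seq_pmf K p). Proj E X Cv Ce \<eta> (run upd bs (sel bs)) \<in> L2 V E X)
          \<and> (\<forall>mu\<in>L2 V E X.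
               measure_pmf.expectation (seq_pmf K p)
                 (\<lambda>bs. cost V E X Cv Ce (Proj E X Cv Ce \<eta> (run upd bs (sel bs))))
               \<le> cost V E X Cv Ce mu + \<epsilon>))"

end

theory Submission
  imports Defs
begin

text \<open>
  The smoothed dual \<open>dual_obj lam = -(\<Sum>\<^sub>i ln Z\<^sub>i + \<Sum>\<^sub>e ln Z\<^sub>e) / \<eta>\<close> is the value of the
  entropy-regularised Lagrangian at the Gibbs tables of \<open>lam\<close>, its minimiser; by Gibbs'
  inequality it lies below the cost of every point of \<open>L\<^sub>2\<close>. An EMP step at \<open>(e, i)\<close> raises it by
  \<open>-2 ln BC / \<eta>\<close>, where \<open>BC\<close> is the Bhattacharyya coefficient of \<open>S\<^sub>e\<^sub>,\<^sub>i\<close> and \<open>\<mu>\<^sub>i\<close>, hence by at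
  least \<open>\<parallel>\<nu>\<^sub>e\<^sub>,\<^sub>i\<parallel>\<^sub>1\<^sup>2 / (4 \<eta>)\<close>; an SMP step at \<open>i\<close> does so for every \<open>e \<in> N\<^sub>i\<close>, by AM-GM. Under
  both block distributions the expected gain is at least the slack objective over \<open>8 m \<eta>\<close>, so
  telescoping against the initial duality gap bounds the expected slack objective of the
  selected iterate by \<open>O(m \<eta> (n + m) \<parallel>C\<parallel> / K)\<close>. On the primal side, mixing any point of \<open>L\<^sub>2\<close>
  with a product table shaped by the slack gives tables with the same slack as the Gibbs
  tables; comparing Lagrangians, the Gibbs tables cost at most that point plus the entropy
  range \<open>(n + 2 m) ln d / \<eta>\<close> plus \<open>O(d (n + m) \<parallel>C\<parallel> \<parallel>\<nu>\<parallel>)\<close>, and rounding onto \<open>L\<^sub>2\<close> adds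
  \<open>O(m \<parallel>C\<parallel> \<parallel>\<nu>\<parallel>)\<close>. The choice of \<open>\<eta>\<close> and \<open>K\<close> makes each error at most \<open>\<epsilon> / 2\<close>.
\<close>

lemma gibbs_inequality:
  fixes p w :: "'a \<Rightarrow> real"
  assumes fin: "finite A" and p0: "\<And>a. a \<in> A \<Longrightarrow> p a \<ge> 0" and p1: "sum p A = 1"
    and w0: "\<And>a. a \<in> A \<Longrightarrow> w a > 0"
  shows "(\<Sum>a\<in>A. p a * ln (w a)) - (\<Sum>a\<in>A. p a * ln (p a)) \<le> ln (sum w A)"
proof -
  define Z where "Z = sum w A"
  have "A \<noteq> {}" using p1 by auto
  then have Z0: "Z > 0" unfolding Z_def using fin w0 by (simp add: sum_pos)
  have termwise: "p a * ln (w a) - p a * ln (p a) \<le> w a / Z - p a + p a * ln Z" if a: "a \<in> A" for a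
  proof (cases "p a = 0")
    case True
    then show ?thesis using w0[OF a] Z0 by simp
  next
    case False
    then have pa: "p a > 0" using p0[OF a] by simp
    have "ln (w a / (p a * Z)) \<le> w a / (p a * Z) - 1"
      using pa Z0 w0[OF a] by (intro ln_le_minus_one) simp
    then have "p a * ln (w a / (p a * Z)) \<le> p a * (w a / (p a * Z) - 1)"
      using pa by (simp add: mult_left_mono)
    moreover have "ln (w a / (p a * Z)) = ln (w a) - ln (p a) - ln Z"
      using pa Z0 w0[OF a] by (simp add: ln_div ln_mult)
    moreover have "p a * (w a / (p a * Z) - 1) = w a / Z - p a"
      using pa Z0 by (simp add: field_simps)
    ultimately have "p a * (ln (w a) - ln (p a) - ln Z) \<le> w a / Z - p a" by simp
    then show ?thesis by (simp add: algebra_simps)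
  qed
  have "(\<Sum>a\<in>A. p a * ln (w a)) - (\<Sum>a\<in>A. p a * ln (p a))
      \<le> (\<Sum>a\<in>A. w a / Z - p a + p a * ln Z)"
    unfolding sum_subtractf[symmetric] by (rule sum_mono) (rule termwise)
  also have "\<dots> = sum w A / Z - sum p A + sum p A * ln Z"
    by (simp add: sum.distrib sum_subtractf sum_divide_distrib sum_distrib_right)
  also have "\<dots> = ln Z" using Z0 p1 by (simp add: Z_def)
  finally show ?thesis by (simp add: Z_def)
qed

lemma gibbs_equality:
  fixes w :: "'a \<Rightarrow> real"
  assumes fin: "finite A" and w0: "\<And>a. a \<in> A \<Longrightarrow> w a > 0" and ne: "A \<noteq> {}"
  defines "p \<equiv> \<lambda>a. w a / sum w A"
  shows "(\<Sum>a\<in>A. p a * ln (w a)) - (\<Sum>a\<in>A. p a * ln (p a)) = ln (sum w A)"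
proof -
  define Z where "Z = sum w A"
  have Z0: "Z > 0" unfolding Z_def using fin ne w0 by (simp add: sum_pos)
  have "(\<Sum>a\<in>A. p a * ln (w a)) - (\<Sum>a\<in>A. p a * ln (p a)) = (\<Sum>a\<in>A. p a) * ln Z"
    unfolding sum_subtractf[symmetric] sum_distrib_right
    by (rule sum.cong) (use Z0 w0 in \<open>auto simp: p_def Z_def[symmetric] ln_div field_simps\<close>)
  also have "(\<Sum>a\<in>A. p a) = 1"
    using Z0 by (simp add: p_def Z_def[symmetric] sum_divide_distrib[symmetric])
  finally show ?thesis by (simp add: Z_def)
qed

lemma entropy_le_ln_card:
  fixes p :: "'a \<Rightarrow> real"
  assumes "finite A" and "\<And>a. a \<in> A \<Longrightarrow> p a \<ge> 0" and "sum p A = 1"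
  shows "- (\<Sum>a\<in>A. p a * ln (p a)) \<le> ln (real (card A))"
  using gibbs_inequality[OF assms, of "\<lambda>_. 1"] by simp

lemma mult_ln_self_nonpos: "0 \<le> (p::real) \<Longrightarrow> p \<le> 1 \<Longrightarrow> p * ln p \<le> 0"
  by (cases "p = 0") (auto simp: mult_nonneg_nonpos)

lemma l1_dist_sq_le_bhattacharyya:
  fixes S m :: "'a \<Rightarrow> real"
  assumes "finite A" and S0: "\<And>a. a \<in> A \<Longrightarrow> S a \<ge> 0" and m0: "\<And>a. a \<in> A \<Longrightarrow> m a \<ge> 0"
    and S1: "sum S A = 1" and m1: "sum m A = 1"
  shows "(\<Sum>a\<in>A. \<bar>S a - m a\<bar>)\<^sup>2 \<le> 8 * (1 - (\<Sum>a\<in>A. sqrt (S a * m a)))"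
proof -
  define BC where "BC = (\<Sum>a\<in>A. sqrt (S a * m a))"
  have factor: "\<bar>S a - m a\<bar> = \<bar>sqrt (S a) - sqrt (m a)\<bar> * (sqrt (S a) + sqrt (m a))"
    if "a \<in> A" for a
  proof -
    have "S a - m a = (sqrt (S a) - sqrt (m a)) * (sqrt (S a) + sqrt (m a))"
      using S0[OF that] m0[OF that] by (simp add: algebra_simps)
    then show ?thesis using S0[OF that] m0[OF that] by (simp add: abs_mult)
  qed
  have minus: "(\<Sum>a\<in>A. \<bar>sqrt (S a) - sqrt (m a)\<bar>\<^sup>2) = 2 - 2 * BC"
  proof -
    have "\<bar>sqrt (S a) - sqrt (m a)\<bar>\<^sup>2 = S a + m a - 2 * sqrt (S a * m a)" if "a \<in> A" for a
      using S0[OF that] m0[OF that] by (simp add: power2_eq_square algebra_simps real_sqrt_mult)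
    then show ?thesis using S1 m1
      by (simp add: BC_def sum.distrib sum_subtractf sum_distrib_left)
  qed
  have plus: "(\<Sum>a\<in>A. (sqrt (S a) + sqrt (m a))\<^sup>2) = 2 + 2 * BC"
  proof -
    have "(sqrt (S a) + sqrt (m a))\<^sup>2 = S a + m a + 2 * sqrt (S a * m a)" if "a \<in> A" for a
      using S0[OF that] m0[OF that] by (simp add: power2_eq_square algebra_simps real_sqrt_mult)
    then show ?thesis using S1 m1 by (simp add: BC_def sum.distrib sum_distrib_left)
  qed
  have "0 \<le> 2 - 2 * BC" unfolding minus[symmetric] by (intro sum_nonneg) simp
  have "(\<Sum>a\<in>A. \<bar>S a - m a\<bar>)\<^sup>2
      = (\<Sum>a\<in>A. \<bar>sqrt (S a) - sqrt (m a)\<bar> * (sqrt (S a) + sqrt (m a)))\<^sup>2"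
    using factor by simp
  also have "\<dots> \<le> (\<Sum>a\<in>A. \<bar>sqrt (S a) - sqrt (m a)\<bar>\<^sup>2) * (\<Sum>a\<in>A. (sqrt (S a) + sqrt (m a))\<^sup>2)"
    by (rule Cauchy_Schwarz_ineq_sum)
  also have "\<dots> = (2 - 2 * BC) * (2 + 2 * BC)" using minus plus by simp
  also have "\<dots> \<le> (2 - 2 * BC) * 4"
    using \<open>0 \<le> 2 - 2 * BC\<close> by (intro mult_left_mono) auto
  finally show ?thesis by (simp add: BC_def algebra_simps)
qed

lemma weighted_sum_ln_le:
  fixes w q :: "'a \<Rightarrow> real"
  assumes fin: "finite N" and w0: "\<And>a. a \<in> N \<Longrightarrow> w a \<ge> 0" and q0: "\<And>a. a \<in> N \<Longrightarrow> q a > 0"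
    and W: "sum w N > 0"
  shows "(\<Sum>a\<in>N. w a * ln (q a)) \<le> sum w N * ln ((\<Sum>a\<in>N. w a * q a) / sum w N)"
proof -
  define A where "A = (\<Sum>a\<in>N. w a * q a) / sum w N"
  obtain a0 where "a0 \<in> N" "w a0 > 0"
    using W sum_nonpos[of N w] by (meson not_le)
  then have wq: "(\<Sum>a\<in>N. w a * q a) > 0"
    using fin w0 q0 by (intro sum_pos2[of N a0]) (auto intro: less_imp_le mult_nonneg_nonneg)
  then have A0: "A > 0" unfolding A_def using W by simp
  have "w a * (ln (q a) - ln A) \<le> w a * (q a / A - 1)" if "a \<in> N" for a
  proof -
    have "ln (q a / A) \<le> q a / A - 1" using q0[OF that] A0 by (intro ln_le_minus_one) simp
    then show ?thesis using q0[OF that] A0 w0[OF that] by (simp add: ln_div mult_left_mono)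
  qed
  then have "(\<Sum>a\<in>N. w a * (ln (q a) - ln A)) \<le> (\<Sum>a\<in>N. w a * (q a / A - 1))"
    by (rule sum_mono)
  also have "\<dots> = (\<Sum>a\<in>N. w a * q a) / A - sum w N"
    by (simp add: right_diff_distrib sum_subtractf sum_divide_distrib)
  also have "\<dots> = 0" using W wq by (simp add: A_def)
  finally show ?thesis
    by (simp add: right_diff_distrib sum_subtractf sum_distrib_right[symmetric] A_def)
qed

text \<open>AM-GM for the \<open>|N| + 1\<close> numbers \<open>m, q e (e \<in> N)\<close>, after replacing the pair
  \<open>m, q e0\<close> by two copies of its geometric mean.\<close>

lemma geometric_mean_le_pair_mean:
  fixes q :: "'a \<Rightarrow> real"
  assumes fin: "finite N" and e0: "e0 \<in> N" and q0: "\<And>e. e \<in> N \<Longrightarrow> q e > 0" and m0: "m > 0"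
  shows "exp ((ln m + (\<Sum>e\<in>N. ln (q e))) / (real (card N) + 1))
           \<le> (2 * sqrt (q e0 * m) + (\<Sum>e\<in>N - {e0}. q e)) / (real (card N) + 1)"
proof -
  define g where "g = sqrt (q e0 * m)"
  define w where "w = (\<lambda>e. if e = e0 then 2 else 1 :: real)"
  define p where "p = (\<lambda>e. if e = e0 then g else q e)"
  define A where "A = (2 * g + (\<Sum>e\<in>N - {e0}. q e)) / (real (card N) + 1)"
  have split: "(\<Sum>e\<in>N. f e) = f e0 + (\<Sum>e\<in>N - {e0}. f e)" for f :: "'a \<Rightarrow> real"
    by (rule sum.remove[OF fin e0])
  have "card N \<ge> 1" using fin e0 by (metis One_nat_def Suc_leI card_gt_0_iff empty_iff)
  then have W: "sum w N = real (card N) + 1"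
    using fin e0 by (simp add: split w_def card_Diff_singleton of_nat_diff)
  have "ln g = (ln (q e0) + ln m) / 2"
    using q0[OF e0] m0 by (simp add: g_def ln_sqrt ln_mult)
  moreover have rest: "(\<Sum>e\<in>N - {e0}. w e * ln (p e)) = (\<Sum>e\<in>N - {e0}. ln (q e))"
    "(\<Sum>e\<in>N - {e0}. w e * p e) = (\<Sum>e\<in>N - {e0}. q e)"
    by (auto simp: w_def p_def intro!: sum.cong)
  ultimately have lhs: "(\<Sum>e\<in>N. w e * ln (p e)) = ln m + (\<Sum>e\<in>N. ln (q e))"
    unfolding split[of "\<lambda>e. w e * ln (p e)"] split[of "\<lambda>e. ln (q e)"] by (simp add: w_def p_def)
  have rhs: "(\<Sum>e\<in>N. w e * p e) = 2 * g + (\<Sum>e\<in>N - {e0}. q e)"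
    unfolding split[of "\<lambda>e. w e * p e"] rest by (simp add: w_def p_def)
  have g0: "g > 0" using q0[OF e0] m0 by (simp add: g_def)
  have "ln m + (\<Sum>e\<in>N. ln (q e)) \<le> (real (card N) + 1) * ln A"
    using weighted_sum_ln_le[OF fin, of w p] q0 g0 W
    unfolding lhs rhs A_def by (simp add: w_def p_def)
  then have "(ln m + (\<Sum>e\<in>N. ln (q e))) / (real (card N) + 1) \<le> ln A"
    by (simp add: divide_le_eq mult.commute)
  moreover have "0 < 2 * g + (\<Sum>e\<in>N - {e0}. q e)"
    using g0 q0 by (intro add_pos_nonneg sum_nonneg) (auto intro: less_imp_le)
  then have "A > 0" by (simp add: A_def)
  ultimately show ?thesis unfolding A_def[symmetric] g_def[symmetric]
    by (metis exp_le_cancel_iff exp_ln)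
qed

lemma sqrt_mult_eq_exp_ln:
  "0 < a \<Longrightarrow> 0 < b \<Longrightarrow> sqrt (a * b) = exp ((ln a + ln b) / 2)"
proof -
  assume "0 < a" "0 < b"
  then have "ln (sqrt (a * b)) = (ln a + ln b) / 2" by (simp add: ln_sqrt ln_mult)
  then show ?thesis using \<open>0 < a\<close> \<open>0 < b\<close> by (metis exp_ln real_sqrt_gt_0_iff mult_pos_pos)
qed

lemma le_amgm_sq_div: "s > 0 \<Longrightarrow> (z::real) \<le> (z\<^sup>2 / s + s) / 2"
proof -
  assume s: "s > 0"
  have "2 * s * z \<le> z\<^sup>2 + s\<^sup>2" using sum_squares_bound[of s z] by (simp add: power2_eq_square)
  then show ?thesis using s by (simp add: field_simps power2_eq_square)
qed

lemma iteration_count_arith: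
  fixes m n d L C \<epsilon> K :: real
  assumes m: "m \<ge> 1" and n: "n \<ge> 0" and d: "d \<ge> 2" and L: "L > 0" and C: "C > 0"
    and \<epsilon>: "\<epsilon> > 0" and K: "9600 * m * d\<^sup>2 * (m + n) ^ 4 * C ^ 3 / \<epsilon> ^ 3 * L \<le> K"
  shows "24 * m * (4 * (m + n) * L / \<epsilon>) * (m + n) * C / K
           \<le> (\<epsilon> / (2 * C * (2 * d * (m + n) + 6 * m)))\<^sup>2"
proof -
  define M where "M = m + n"
  define A where "A = 2 * d * M + 6 * m"
  have M0: "M > 0" and A0: "A > 0" using m n d by (simp_all add: M_def A_def add_pos_nonneg)
  have "6 * m \<le> 6 * M" using n by (simp add: M_def)
  also have "\<dots> \<le> 3 * d * M" using mult_right_mono[of 6 "3 * d" M] d M0 by simp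
  finally have "6 * m \<le> 3 * d * M" .
  then have "A\<^sup>2 \<le> (5 * d * M)\<^sup>2" using A0 by (intro power_mono) (auto simp: A_def)
  then have "4 * C\<^sup>2 * A\<^sup>2 \<le> 4 * C\<^sup>2 * (5 * d * M)\<^sup>2" by (intro mult_left_mono) auto
  also have "\<dots> = 100 * C\<^sup>2 * d\<^sup>2 * M\<^sup>2" by algebra
  finally have A2: "4 * C\<^sup>2 * A\<^sup>2 \<le> 100 * C\<^sup>2 * d\<^sup>2 * M\<^sup>2" .
  have a0: "0 < 96 * m * M\<^sup>2 * L * C" and e0: "0 < 100 * C\<^sup>2 * d\<^sup>2 * M\<^sup>2"
    using m d M0 L C by simp_all
  have "(96 * m * M\<^sup>2 * L * C) * (100 * C\<^sup>2 * d\<^sup>2 * M\<^sup>2) = 9600 * m * d\<^sup>2 * M ^ 4 * C ^ 3 * L"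
    by algebra
  also have "\<dots> \<le> \<epsilon> ^ 3 * K"
    using mult_left_mono[OF K, of "\<epsilon> ^ 3"] \<epsilon> by (simp add: M_def)
  also have "\<dots> = \<epsilon>\<^sup>2 * (\<epsilon> * K)" by algebra
  finally have cross: "(96 * m * M\<^sup>2 * L * C) * (100 * C\<^sup>2 * d\<^sup>2 * M\<^sup>2) \<le> \<epsilon>\<^sup>2 * (\<epsilon> * K)" .
  then have "0 < \<epsilon>\<^sup>2 * (\<epsilon> * K)" using a0 e0 by (meson mult_pos_pos order_less_le_trans)
  then have K0: "0 < \<epsilon> * K" using \<epsilon> by (simp add: zero_less_mult_iff)
  have cross_divide: "a / b \<le> c / e" if "0 < b" "0 < e" "a * e \<le> c * b" for a b c e :: real
    using that by (simp add: divide_le_eq le_divide_eq mult.commute)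
  have "24 * m * (4 * M * L / \<epsilon>) * M * C / K = (96 * m * M\<^sup>2 * L * C) / (\<epsilon> * K)"
    by (simp add: power2_eq_square)
  also have "\<dots> \<le> \<epsilon>\<^sup>2 / (100 * C\<^sup>2 * d\<^sup>2 * M\<^sup>2)"
    by (rule cross_divide[OF K0 e0 cross])
  also have "\<dots> \<le> \<epsilon>\<^sup>2 / (4 * C\<^sup>2 * A\<^sup>2)"
    by (rule divide_left_mono[OF A2]) (use A0 C e0 in \<open>auto intro!: mult_pos_pos\<close>)
  also have "\<dots> = (\<epsilon> / (2 * C * A))\<^sup>2" by (simp add: power_divide power_mult_distrib)
  finally show ?thesis by (simp add: M_def A_def)
qed

section \<open>Rounding onto the transportation polytope\<close>

lemma min_ratio_one_bounds:
  fixes R r :: real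
  assumes "0 \<le> R" "0 \<le> r"
  shows "0 \<le> min (r / R) 1" and "min (r / R) 1 \<le> 1" and "min (r / R) 1 * R \<le> r"
    and "R - min (r / R) 1 * R \<le> \<bar>R - r\<bar>" and "r - min (r / R) 1 * R \<le> \<bar>R - r\<bar>"
proof -
  have "min (r / R) 1 * R = (if R = 0 then 0 else min r R)"
    using assms by (auto simp: min_def field_simps)
  then show "min (r / R) 1 * R \<le> r" "R - min (r / R) 1 * R \<le> \<bar>R - r\<bar>"
    "r - min (r / R) 1 * R \<le> \<bar>R - r\<bar>"
    using assms by auto
qed (use assms in auto)

lemma sum_abs_scale_rows:
  fixes F :: "'a \<Rightarrow> 'b \<Rightarrow> real"
  assumes a0: "\<And>x. x \<in> X \<Longrightarrow> 0 \<le> a x" and a1: "\<And>x. x \<in> X \<Longrightarrow> a x \<le> 1"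
    and F0: "\<And>x y. x \<in> X \<Longrightarrow> y \<in> Y \<Longrightarrow> 0 \<le> F x y"
  shows "(\<Sum>x\<in>X. \<Sum>y\<in>Y. \<bar>a x * F x y - F x y\<bar>)
       = (\<Sum>x\<in>X. (\<Sum>y\<in>Y. F x y) - a x * (\<Sum>y\<in>Y. F x y))"
proof (intro sum.cong refl)
  fix x assume x: "x \<in> X"
  have "\<bar>a x * F x y - F x y\<bar> = F x y - a x * F x y" if "y \<in> Y" for y
    using a0[OF x] a1[OF x] F0[OF x that] mult_left_le_one_le[of "F x y" "a x"] by simp
  then show "(\<Sum>y\<in>Y. \<bar>a x * F x y - F x y\<bar>) = (\<Sum>y\<in>Y. F x y) - a x * (\<Sum>y\<in>Y. F x y)"
    by (simp add: sum_subtractf sum_distrib_left)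
qed

lemma sum_abs_col_sums_diff_le:
  fixes G F :: "'a \<Rightarrow> 'b \<Rightarrow> real"
  shows "(\<Sum>y\<in>Y. \<bar>(\<Sum>x\<in>X. G x y) - c y\<bar>)
           \<le> (\<Sum>x\<in>X. \<Sum>y\<in>Y. \<bar>G x y - F x y\<bar>) + (\<Sum>y\<in>Y. \<bar>(\<Sum>x\<in>X. F x y) - c y\<bar>)"
proof -
  have "\<bar>(\<Sum>x\<in>X. G x y) - c y\<bar> \<le> (\<Sum>x\<in>X. \<bar>G x y - F x y\<bar>) + \<bar>(\<Sum>x\<in>X. F x y) - c y\<bar>" for y
  proof -
    have "\<bar>(\<Sum>x\<in>X. G x y) - (\<Sum>x\<in>X. F x y)\<bar> \<le> (\<Sum>x\<in>X. \<bar>G x y - F x y\<bar>)"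
      unfolding sum_subtractf[symmetric] by (rule sum_abs)
    then show ?thesis
      using abs_triangle_ineq[of "(\<Sum>x\<in>X. G x y) - (\<Sum>x\<in>X. F x y)" "(\<Sum>x\<in>X. F x y) - c y"] by simp
  qed
  then have "(\<Sum>y\<in>Y. \<bar>(\<Sum>x\<in>X. G x y) - c y\<bar>)
      \<le> (\<Sum>y\<in>Y. \<Sum>x\<in>X. \<bar>G x y - F x y\<bar>) + (\<Sum>y\<in>Y. \<bar>(\<Sum>x\<in>X. F x y) - c y\<bar>)"
    unfolding sum.distrib[symmetric] by (rule sum_mono)
  then show ?thesis by (subst sum.swap)
qed

lemma rank_one_correction:
  fixes G :: "'a \<Rightarrow> 'a \<Rightarrow> real" and r c :: "'a \<Rightarrow> real"
  assumes fin: "finite X" and G0: "\<And>x y. x \<in> X \<Longrightarrow> y \<in> X \<Longrightarrow> 0 \<le> G x y"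
    and row: "\<And>x. x \<in> X \<Longrightarrow> (\<Sum>y\<in>X. G x y) \<le> r x"
    and col: "\<And>y. y \<in> X \<Longrightarrow> (\<Sum>x\<in>X. G x y) \<le> c y"
    and rc: "sum r X = sum c X"
  defines "er \<equiv> \<lambda>x. r x - (\<Sum>y\<in>X. G x y)" and "ec \<equiv> \<lambda>y. c y - (\<Sum>x\<in>X. G x y)"
  defines "R \<equiv> if \<forall>y\<in>X. ec y = 0 then G
                else (\<lambda>x y. G x y + er x * ec y / (\<Sum>z\<in>X. \<bar>ec z\<bar>))"
  shows "\<forall>x\<in>X. \<forall>y\<in>X. 0 \<le> R x y" and "\<forall>x\<in>X. (\<Sum>y\<in>X. R x y) = r x"
    and "\<forall>y\<in>X. (\<Sum>x\<in>X. R x y) = c y" and "(\<Sum>x\<in>X. \<Sum>y\<in>X. \<bar>R x y - G x y\<bar>) = sum ec X"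
proof -
  have er0: "x \<in> X \<Longrightarrow> 0 \<le> er x" for x using row by (simp add: er_def)
  have ec0: "y \<in> X \<Longrightarrow> 0 \<le> ec y" for y using col by (simp add: ec_def)
  have sums: "sum er X = sum ec X"
    using rc sum.swap[of G X X] by (simp add: er_def ec_def sum_subtractf)
  have "(\<forall>x\<in>X. \<forall>y\<in>X. 0 \<le> R x y) \<and> (\<forall>x\<in>X. (\<Sum>y\<in>X. R x y) = r x)
    \<and> (\<forall>y\<in>X. (\<Sum>x\<in>X. R x y) = c y) \<and> (\<Sum>x\<in>X. \<Sum>y\<in>X. \<bar>R x y - G x y\<bar>) = sum ec X"
  proof (cases "\<forall>y\<in>X. ec y = 0")
    case True
    then have "\<forall>x\<in>X. er x = 0"
      using sums True sum_nonneg_eq_0_iff[OF fin er0] by simp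
    then show ?thesis using True G0 by (simp add: R_def er_def ec_def)
  next
    case False
    define T where "T = (\<Sum>z\<in>X. \<bar>ec z\<bar>)"
    have T: "T = sum ec X" unfolding T_def using ec0 by simp
    obtain y where "y \<in> X" "ec y \<noteq> 0" using False by auto
    then have "ec y \<le> sum ec X" using ec0 fin by (intro member_le_sum) auto
    with \<open>ec y \<noteq> 0\<close> \<open>y \<in> X\<close> ec0[of y] have T0: "T > 0" by (simp add: T)
    have R: "R = (\<lambda>x y. G x y + er x * ec y / T)" using False by (simp add: R_def T_def)
    have "(\<Sum>y\<in>X. R x y) = r x" for x
      using T T0 by (simp add: R sum.distrib sum_divide_distrib[symmetric] sum_distrib_left[symmetric] er_def)
    moreover have "(\<Sum>x\<in>X. R x y) = c y" for y
      using T T0 sums by (simp add: R sum.distrib sum_divide_distrib[symmetric] sum_distrib_right[symmetric] ec_def)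
    moreover have "(\<Sum>x\<in>X. \<Sum>y\<in>X. \<bar>R x y - G x y\<bar>) = sum er X * sum ec X / T"
      using er0 ec0 T0 by (simp add: R sum_divide_distrib[symmetric] sum_product)
    ultimately show ?thesis using G0 er0 ec0 T0 sums T by (simp add: R)
  qed
  then show "\<forall>x\<in>X. \<forall>y\<in>X. 0 \<le> R x y" "\<forall>x\<in>X. (\<Sum>y\<in>X. R x y) = r x"
    "\<forall>y\<in>X. (\<Sum>x\<in>X. R x y) = c y" "(\<Sum>x\<in>X. \<Sum>y\<in>X. \<bar>R x y - G x y\<bar>) = sum ec X"
    by auto
qed

lemma scale_rows_props:
  fixes G :: "'a \<Rightarrow> 'b \<Rightarrow> real" and r :: "'a \<Rightarrow> real"
  assumes G0: "\<And>x y. x \<in> X \<Longrightarrow> y \<in> Y \<Longrightarrow> 0 \<le> G x y" and r0: "\<And>x. x \<in> X \<Longrightarrow> 0 \<le> r x"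
  defines "G' \<equiv> \<lambda>x y. min (r x / (\<Sum>y\<in>Y. G x y)) 1 * G x y"
  shows "\<And>x y. x \<in> X \<Longrightarrow> y \<in> Y \<Longrightarrow> 0 \<le> G' x y \<and> G' x y \<le> G x y"
    and "\<And>x. x \<in> X \<Longrightarrow> (\<Sum>y\<in>Y. G' x y) \<le> r x"
    and "\<And>x. x \<in> X \<Longrightarrow> r x - (\<Sum>y\<in>Y. G' x y) \<le> \<bar>(\<Sum>y\<in>Y. G x y) - r x\<bar>"
    and "(\<Sum>x\<in>X. \<Sum>y\<in>Y. \<bar>G' x y - G x y\<bar>) \<le> (\<Sum>x\<in>X. \<bar>(\<Sum>y\<in>Y. G x y) - r x\<bar>)"
proof -
  define a where "a = (\<lambda>x. min (r x / (\<Sum>y\<in>Y. G x y)) 1)"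
  have G': "G' x y = a x * G x y" for x y by (simp add: G'_def a_def)
  have row: "(\<Sum>y\<in>Y. G' x y) = a x * (\<Sum>y\<in>Y. G x y)" for x
    by (simp add: G' sum_distrib_left)
  have a: "0 \<le> a x" "a x \<le> 1" "a x * (\<Sum>y\<in>Y. G x y) \<le> r x"
    "(\<Sum>y\<in>Y. G x y) - a x * (\<Sum>y\<in>Y. G x y) \<le> \<bar>(\<Sum>y\<in>Y. G x y) - r x\<bar>"
    "r x - a x * (\<Sum>y\<in>Y. G x y) \<le> \<bar>(\<Sum>y\<in>Y. G x y) - r x\<bar>" if "x \<in> X" for x
    unfolding a_def using min_ratio_one_bounds[OF sum_nonneg[OF G0[OF that]] r0[OF that]] by auto
  show "0 \<le> G' x y \<and> G' x y \<le> G x y" if "x \<in> X" "y \<in> Y" for x y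
    using a(1,2)[OF that(1)] G0[OF that] by (simp add: G' mult_left_le_one_le)
  show "(\<Sum>y\<in>Y. G' x y) \<le> r x" "r x - (\<Sum>y\<in>Y. G' x y) \<le> \<bar>(\<Sum>y\<in>Y. G x y) - r x\<bar>"
    if "x \<in> X" for x
    using a(3,5)[OF that] by (simp_all add: row)
  have "(\<Sum>x\<in>X. \<Sum>y\<in>Y. \<bar>G' x y - G x y\<bar>)
      = (\<Sum>x\<in>X. (\<Sum>y\<in>Y. G x y) - a x * (\<Sum>y\<in>Y. G x y))"
    unfolding G' by (rule sum_abs_scale_rows[OF a(1,2) G0])
  also have "\<dots> \<le> (\<Sum>x\<in>X. \<bar>(\<Sum>y\<in>Y. G x y) - r x\<bar>)" using a(4) by (intro sum_mono) auto
  finally show "(\<Sum>x\<in>X. \<Sum>y\<in>Y. \<bar>G' x y - G x y\<bar>) \<le> (\<Sum>x\<in>X. \<bar>(\<Sum>y\<in>Y. G x y) - r x\<bar>)" .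
qed

lemma round_map_props:
  fixes F :: "nat \<Rightarrow> nat \<Rightarrow> real" and r c :: "nat \<Rightarrow> real"
  assumes fin: "finite X" and F0: "\<And>x y. x \<in> X \<Longrightarrow> y \<in> X \<Longrightarrow> F x y \<ge> 0"
    and r0: "\<And>x. x \<in> X \<Longrightarrow> r x \<ge> 0" and c0: "\<And>y. y \<in> X \<Longrightarrow> c y \<ge> 0"
    and rc: "sum r X = sum c X"
  defines "R \<equiv> round_map X F r c"
  shows "\<forall>x\<in>X. \<forall>y\<in>X. R x y \<ge> 0" and "\<forall>x\<in>X. (\<Sum>y\<in>X. R x y) = r x"
    and "\<forall>y\<in>X. (\<Sum>x\<in>X. R x y) = c y"
    and "(\<Sum>x\<in>X. \<Sum>y\<in>X. \<bar>R x y - F x y\<bar>)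
           \<le> 3 * ((\<Sum>x\<in>X. \<bar>(\<Sum>y\<in>X. F x y) - r x\<bar>) + (\<Sum>y\<in>X. \<bar>(\<Sum>x\<in>X. F x y) - c y\<bar>))"
proof -
  define F1 where "F1 = (\<lambda>x y. min (r x / (\<Sum>y\<in>X. F x y)) 1 * F x y)"
  define F2 where "F2 = (\<lambda>x y. min (c y / (\<Sum>x\<in>X. F1 x y)) 1 * F1 x y)"
  have F1_apply: "F1 x y = min (r x / (\<Sum>y\<in>X. F x y)) 1 * F x y"
    and F2_apply: "F2 x y = min (c y / (\<Sum>x\<in>X. F1 x y)) 1 * F1 x y" for x y
    by (simp_all add: F1_def F2_def)
  define Dr where "Dr = (\<Sum>x\<in>X. \<bar>(\<Sum>y\<in>X. F x y) - r x\<bar>)"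
  define Dc where "Dc = (\<Sum>y\<in>X. \<bar>(\<Sum>x\<in>X. F x y) - c y\<bar>)"
  have rows: "\<And>x y. x \<in> X \<Longrightarrow> y \<in> X \<Longrightarrow> 0 \<le> F1 x y \<and> F1 x y \<le> F x y"
    "\<And>x. x \<in> X \<Longrightarrow> (\<Sum>y\<in>X. F1 x y) \<le> r x"
    "(\<Sum>x\<in>X. \<Sum>y\<in>X. \<bar>F1 x y - F x y\<bar>) \<le> Dr"
    using scale_rows_props[where X = X and Y = X and G = F and r = r, OF F0 r0]
    by (simp_all add: F1_apply Dr_def)
  have cols: "\<And>x y. x \<in> X \<Longrightarrow> y \<in> X \<Longrightarrow> 0 \<le> F2 x y \<and> F2 x y \<le> F1 x y"
    "\<And>y. y \<in> X \<Longrightarrow> (\<Sum>x\<in>X. F2 x y) \<le> c y"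
    "\<And>y. y \<in> X \<Longrightarrow> c y - (\<Sum>x\<in>X. F2 x y) \<le> \<bar>(\<Sum>x\<in>X. F1 x y) - c y\<bar>"
    "(\<Sum>y\<in>X. \<Sum>x\<in>X. \<bar>F2 x y - F1 x y\<bar>) \<le> (\<Sum>y\<in>X. \<bar>(\<Sum>x\<in>X. F1 x y) - c y\<bar>)"
    using scale_rows_props[where X = X and Y = X and G = "\<lambda>y x. F1 x y" and r = c, OF _ c0] rows(1)
    by (simp_all add: F2_apply)
  have F20: "x \<in> X \<Longrightarrow> y \<in> X \<Longrightarrow> 0 \<le> F2 x y" for x y using cols(1) by simp
  have row2: "(\<Sum>y\<in>X. F2 x y) \<le> r x" if "x \<in> X" for x
  proof -
    have "(\<Sum>y\<in>X. F2 x y) \<le> (\<Sum>y\<in>X. F1 x y)" using cols(1) that by (intro sum_mono) simp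
    then show ?thesis using rows(2)[OF that] by linarith
  qed
  have dcol1: "(\<Sum>y\<in>X. \<bar>(\<Sum>x\<in>X. F1 x y) - c y\<bar>) \<le> Dr + Dc"
    using sum_abs_col_sums_diff_le[where X = X and Y = X and G = F1 and F = F and c = c] rows(3)
    by (simp add: Dc_def)
  have "round_map X F r c = (if \<forall>y\<in>X. c y - (\<Sum>x\<in>X. F2 x y) = 0 then F2
      else (\<lambda>x y. F2 x y + (r x - (\<Sum>y\<in>X. F2 x y)) * (c y - (\<Sum>x\<in>X. F2 x y))
                          / (\<Sum>z\<in>X. \<bar>c z - (\<Sum>x\<in>X. F2 x z)\<bar>)))"
    unfolding round_map_def Let_def F2_def F1_def by (simp add: mult.commute)
  note corr = rank_one_correction[of X F2 r c, OF fin F20 row2 cols(2) rc, folded this R_def]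
  have "(\<Sum>y\<in>X. c y - (\<Sum>x\<in>X. F2 x y)) \<le> (\<Sum>y\<in>X. \<bar>(\<Sum>x\<in>X. F1 x y) - c y\<bar>)"
    using cols(3) by (rule sum_mono)
  then have dist3: "(\<Sum>x\<in>X. \<Sum>y\<in>X. \<bar>R x y - F2 x y\<bar>) \<le> Dr + Dc"
    using corr(4) dcol1 by linarith
  have "\<bar>R x y - F x y\<bar> \<le> \<bar>R x y - F2 x y\<bar> + \<bar>F2 x y - F1 x y\<bar> + \<bar>F1 x y - F x y\<bar>" for x y
    by linarith
  then have "(\<Sum>x\<in>X. \<Sum>y\<in>X. \<bar>R x y - F x y\<bar>) \<le> (\<Sum>x\<in>X. \<Sum>y\<in>X. \<bar>R x y - F2 x y\<bar>)
      + (\<Sum>x\<in>X. \<Sum>y\<in>X. \<bar>F2 x y - F1 x y\<bar>) + (\<Sum>x\<in>X. \<Sum>y\<in>X. \<bar>F1 x y - F x y\<bar>)"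
    unfolding sum.distrib[symmetric] by (intro sum_mono) auto
  also have "\<dots> \<le> (Dr + Dc) + (Dr + Dc) + Dr"
    using dist3 order_trans[OF cols(4) dcol1] rows(3) sum.swap[of "\<lambda>x y. \<bar>F2 x y - F1 x y\<bar>" X X]
    by (intro add_mono) simp_all
  also have "\<dots> \<le> 3 * (Dr + Dc)" unfolding Dc_def by (simp add: sum_nonneg)
  finally show "(\<Sum>x\<in>X. \<Sum>y\<in>X. \<bar>R x y - F x y\<bar>)
      \<le> 3 * ((\<Sum>x\<in>X. \<bar>(\<Sum>y\<in>X. F x y) - r x\<bar>) + (\<Sum>y\<in>X. \<bar>(\<Sum>x\<in>X. F x y) - c y\<bar>))"
    by (simp add: Dr_def Dc_def)
  show "\<forall>x\<in>X. \<forall>y\<in>X. R x y \<ge> 0" "\<forall>x\<in>X. (\<Sum>y\<in>X. R x y) = r x" "\<forall>y\<in>X. (\<Sum>x\<in>X. R x y) = c y"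
    using corr(1-3) by auto
qed

section \<open>Iterating along a random block sequence\<close>

definition run_from :: "('b \<Rightarrow> 's \<Rightarrow> 's) \<Rightarrow> 's \<Rightarrow> 'b list \<Rightarrow> nat \<Rightarrow> 's" where
  "run_from upd s bs k = foldl (\<lambda>s b. upd b s) s (take k bs)"

lemma run_eq_run_from: "run upd bs k = run_from upd (\<lambda>_ _ _. 0) bs k"
  by (simp add: run_def run_from_def)

lemma run_from_0 [simp]: "run_from upd s bs 0 = s"
  by (simp add: run_from_def)

lemma run_from_Cons_Suc [simp]: "run_from upd s (b # bs) (Suc k) = run_from upd (upd b s) bs k"
  by (simp add: run_from_def)

lemma finite_set_seq_pmf: "finite (set_pmf p) \<Longrightarrow> finite (set_pmf (seq_pmf K p))"
  by (induction K) auto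

lemma expectation_mono_finite_pmf:
  "finite (set_pmf p) \<Longrightarrow> (\<And>a. a \<in> set_pmf p \<Longrightarrow> f a \<le> g a) \<Longrightarrow>
    measure_pmf.expectation p f \<le> measure_pmf.expectation p (g :: _ \<Rightarrow> real)"
  by (intro integral_mono_AE integrable_measure_pmf_finite) (auto simp: AE_measure_pmf_iff)

lemma expectation_seq_pmf_Suc:
  assumes fp: "finite (set_pmf p)"
  shows "measure_pmf.expectation (seq_pmf (Suc K) p) h
       = measure_pmf.expectation p (\<lambda>a. measure_pmf.expectation (seq_pmf K p) (\<lambda>bs. h (a # bs) :: real))"
  by (simp add: pmf_expectation_bind[OF fp] finite_set_seq_pmf[OF fp])
     (subst integral_measure_pmf[OF fp], auto simp: mult.commute)

lemma expected_sum_le_of_expected_progress: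
  fixes F Q :: "'s \<Rightarrow> real" and upd :: "'b \<Rightarrow> 's \<Rightarrow> 's"
  assumes fp: "finite (set_pmf p)" and \<kappa>: "\<kappa> > 0" and bounded: "\<And>s. F s \<le> G"
    and progress: "\<And>s. F s + \<kappa> * Q s \<le> measure_pmf.expectation p (\<lambda>b. F (upd b s))"
  shows "measure_pmf.expectation (seq_pmf K p) (\<lambda>bs. \<Sum>k<K. Q (run_from upd s bs k))
           \<le> (G - F s) / \<kappa>"
proof (induction K arbitrary: s)
  case 0
  then show ?case using bounded[of s] \<kappa> by simp
next
  case (Suc K)
  have fK: "finite (set_pmf (seq_pmf K p))" using fp by (rule finite_set_seq_pmf)
  have "measure_pmf.expectation (seq_pmf (Suc K) p) (\<lambda>bs. \<Sum>k<Suc K. Q (run_from upd s bs k))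
      = measure_pmf.expectation p (\<lambda>b. Q s + measure_pmf.expectation (seq_pmf K p)
           (\<lambda>bs. \<Sum>k<K. Q (run_from upd (upd b s) bs k)))"
    unfolding expectation_seq_pmf_Suc[OF fp] sum.lessThan_Suc_shift
    by (simp add: integrable_measure_pmf_finite[OF fK])
  also have "\<dots> \<le> measure_pmf.expectation p (\<lambda>b. Q s + (G - F (upd b s)) / \<kappa>)"
    using Suc.IH by (intro expectation_mono_finite_pmf[OF fp]) simp
  also have "\<dots> = Q s + (G - measure_pmf.expectation p (\<lambda>b. F (upd b s))) / \<kappa>"
    by (simp add: integrable_measure_pmf_finite[OF fp] diff_divide_distrib)
  also have "\<dots> \<le> Q s + (G - (F s + \<kappa> * Q s)) / \<kappa>"
    using progress[of s] \<kappa> by (simp add: divide_right_mono)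
  also have "\<dots> = (G - F s) / \<kappa>" using \<kappa> by (simp add: field_simps)
  finally show ?case .
qed

section \<open>Gibbs tables and the smoothed dual\<close>

lemma sum_cartesian_fst_snd:
  "(\<Sum>p\<in>A \<times> B. h (fst p) (snd p)) = (\<Sum>x\<in>A. \<Sum>y\<in>B. (h x y :: real))"
  by (simp add: sum.cartesian_product split_beta)

definition edge_marg :: "(edge \<Rightarrow> nat \<Rightarrow> nat \<Rightarrow> real) \<Rightarrow> nat set \<Rightarrow> edge \<Rightarrow> nat \<Rightarrow> nat \<Rightarrow> real" where
  "edge_marg me X e i x = (if i = fst e then (\<Sum>y\<in>X. me e x y) else (\<Sum>y\<in>X. me e y x))"

lemma cost_convex_comb:
  "cost V E X Cv Ce (\<lambda>i x. (1 - t) * f i x + t * g i x, \<lambda>e x y. (1 - t) * h e x y + t * k e x y)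
   = (1 - t) * cost V E X Cv Ce (f, h) + t * cost V E X Cv Ce (g, k)"
  by (simp add: cost_def distrib_left sum.distrib sum_distrib_left mult.left_commute)

locale pairwise_mrf =
  fixes V :: "nat set" and E :: "edge set" and X :: "nat set"
    and Cv :: "nat \<Rightarrow> nat \<Rightarrow> real" and Ce :: "edge \<Rightarrow> nat \<Rightarrow> nat \<Rightarrow> real" and \<eta> :: real
  assumes graph: "graph V E" and finite_X: "finite X" and card_X: "2 \<le> card X"
    and eta_pos: "\<eta> > 0"
begin

abbreviation "Zv lam i \<equiv> \<Sum>y\<in>X. wV E Cv \<eta> lam i y"
abbreviation "Ze lam e \<equiv> \<Sum>p\<in>X \<times> X. wE Ce \<eta> lam e (fst p) (snd p)"
abbreviation "mu_v \<equiv> muV E X Cv \<eta>"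
abbreviation "mu_e \<equiv> muE X Ce \<eta>"
abbreviation "marg \<equiv> Smarg X Ce \<eta>"
abbreviation "nu \<equiv> slack E X Cv Ce \<eta>"
abbreviation "slack_sq \<equiv> slack_obj E X Cv Ce \<eta>"
abbreviation "primal \<equiv> cost V E X Cv Ce"
abbreviation "Cmax \<equiv> Cnorm V E X Cv Ce"
abbreviation "d \<equiv> real (card X)"

lemma finite_V: "finite V" and finite_E: "finite E" and V_ne: "V \<noteq> {}"
  and ends_in_V: "e \<in> E \<Longrightarrow> fst e \<in> V \<and> snd e \<in> V"
  and fst_ne_snd: "e \<in> E \<Longrightarrow> fst e \<noteq> snd e"
  and nbr_ne: "i \<in> V \<Longrightarrow> nbr E i \<noteq> {}"
  using graph unfolding graph_def by auto

lemma X_ne: "X \<noteq> {}" using card_X by auto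

lemma d_pos: "d > 0" using card_X by simp

lemma ends_subset_V: "e \<in> E \<Longrightarrow> ends e \<subseteq> V" using ends_in_V by (auto simp: ends_def)

lemma sum_ends: "e \<in> E \<Longrightarrow> (\<Sum>i\<in>ends e. f i) = f (fst e) + (f (snd e) :: real)"
  using fst_ne_snd by (simp add: ends_def)

lemma card_ends: "e \<in> E \<Longrightarrow> card (ends e) = 2"
  using fst_ne_snd by (simp add: ends_def)

lemma nbr_subset: "nbr E i \<subseteq> E" by (auto simp: nbr_def)

lemma finite_nbr: "finite (nbr E i)" using finite_E nbr_subset by (rule rev_finite_subset)

lemma mem_nbr_iff: "e \<in> nbr E i \<longleftrightarrow> e \<in> E \<and> i \<in> ends e" by (simp add: nbr_def)

lemma E_ne: "E \<noteq> {}" using V_ne nbr_ne nbr_subset by blast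

lemma card_E_ge_1: "real (card E) \<ge> 1" using E_ne finite_E by (simp add: Suc_leI card_gt_0_iff)

lemma sum_nbr_eq_sum_ends:
  "(\<Sum>i\<in>V. \<Sum>e\<in>nbr E i. f e i) = (\<Sum>e\<in>E. \<Sum>i\<in>ends e. (f e i :: real))"
proof -
  have "(\<Sum>i\<in>V. \<Sum>e\<in>nbr E i. f e i) = (\<Sum>e\<in>E. \<Sum>i\<in>{i\<in>V. i \<in> ends e}. f e i)"
    unfolding nbr_def
    using sum.swap_restrict[OF finite_V finite_E, of "\<lambda>i e. f e i" "\<lambda>i e. i \<in> ends e"] by simp
  also have "\<dots> = (\<Sum>e\<in>E. \<Sum>i\<in>ends e. f e i)"
    by (intro sum.cong refl) (use ends_subset_V in auto)
  finally show ?thesis .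
qed

lemma sum_card_nbr: "(\<Sum>i\<in>V. real (card (nbr E i))) = 2 * real (card E)"
  using sum_nbr_eq_sum_ends[of "\<lambda>_ _. 1"] by (simp add: card_ends)

lemma wV_pos: "wV E Cv \<eta> lam i x > 0" by (simp add: wV_def)

lemma wE_pos: "wE Ce \<eta> lam e x y > 0" by (simp add: wE_def)

lemma Zv_pos: "Zv lam i > 0" using finite_X X_ne wV_pos by (simp add: sum_pos)

lemma Ze_pos: "Ze lam e > 0" using finite_X X_ne wE_pos by (simp add: sum_pos)

lemma Ze_eq: "Ze lam e = (\<Sum>x\<in>X. \<Sum>y\<in>X. wE Ce \<eta> lam e x y)"
  by (rule sum_cartesian_fst_snd)

lemma mu_v_pos: "mu_v lam i x > 0" using wV_pos Zv_pos by (simp add: muV_def)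

lemma sum_mu_v: "(\<Sum>x\<in>X. mu_v lam i x) = 1"
  using Zv_pos[of lam i] by (simp add: muV_def sum_divide_distrib[symmetric])

lemma mu_e_pos: "mu_e lam e x y > 0" using wE_pos Ze_pos by (simp add: muE_def)

lemma sum_mu_e: "(\<Sum>x\<in>X. \<Sum>y\<in>X. mu_e lam e x y) = 1"
  using Ze_pos[of lam e]
  by (simp add: muE_def sum_divide_distrib[symmetric] sum_cartesian_fst_snd[symmetric])

lemma marg_pos: "x \<in> X \<Longrightarrow> marg lam e i x > 0"
  using finite_X X_ne mu_e_pos by (simp add: Smarg_def sum_pos)

lemma sum_marg: "(\<Sum>x\<in>X. marg lam e i x) = 1"
  using sum_mu_e[of lam e] sum.swap[of "mu_e lam e" X X]
  by (cases "i = fst e") (simp_all add: Smarg_def)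

lemma marg_eq_edge_marg: "marg lam e i x = edge_marg (mu_e lam) X e i x"
  by (simp add: Smarg_def edge_marg_def)

lemma sum_nu: "(\<Sum>x\<in>X. nu lam e i x) = 0"
  by (simp add: slack_def sum_subtractf sum_marg sum_mu_v)

definition dual_obj :: "dual \<Rightarrow> real" where
  "dual_obj lam = - (1/\<eta>) * ((\<Sum>i\<in>V. ln (Zv lam i)) + (\<Sum>e\<in>E. ln (Ze lam e)))"

definition prob_tables :: "pseudo \<Rightarrow> bool" where
  "prob_tables mu \<longleftrightarrow> (\<forall>i\<in>V. \<forall>x\<in>X. fst mu i x \<ge> 0) \<and> (\<forall>i\<in>V. (\<Sum>x\<in>X. fst mu i x) = 1)
     \<and> (\<forall>e\<in>E. \<forall>x\<in>X. \<forall>y\<in>X. snd mu e x y \<ge> 0) \<and> (\<forall>e\<in>E. (\<Sum>x\<in>X. \<Sum>y\<in>X. snd mu e x y) = 1)"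

definition neg_entropy :: "pseudo \<Rightarrow> real" where
  "neg_entropy mu = (\<Sum>i\<in>V. \<Sum>x\<in>X. fst mu i x * ln (fst mu i x))
          + (\<Sum>e\<in>E. \<Sum>x\<in>X. \<Sum>y\<in>X. snd mu e x y * ln (snd mu e x y))"

definition lagrangian :: "dual \<Rightarrow> pseudo \<Rightarrow> real" where
  "lagrangian lam mu = primal mu + neg_entropy mu / \<eta>
     + (\<Sum>e\<in>E. \<Sum>i\<in>ends e. \<Sum>x\<in>X. lam e i x * (edge_marg (snd mu) X e i x - fst mu i x))"

definition gibbs :: "dual \<Rightarrow> pseudo" where
  "gibbs lam = (mu_v lam, mu_e lam)"

definition vertex_free_energy :: "dual \<Rightarrow> pseudo \<Rightarrow> nat \<Rightarrow> real" where
  "vertex_free_energy lam mu i =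
     (\<Sum>x\<in>X. fst mu i x * ln (wV E Cv \<eta> lam i x)) - (\<Sum>x\<in>X. fst mu i x * ln (fst mu i x))"

definition edge_free_energy :: "dual \<Rightarrow> pseudo \<Rightarrow> edge \<Rightarrow> real" where
  "edge_free_energy lam mu e =
     (\<Sum>x\<in>X. \<Sum>y\<in>X. snd mu e x y * ln (wE Ce \<eta> lam e x y))
   - (\<Sum>x\<in>X. \<Sum>y\<in>X. snd mu e x y * ln (snd mu e x y))"

lemma vertex_free_energy_eq:
  "- (1/\<eta>) * vertex_free_energy lam (mv, me) i
     = (\<Sum>x\<in>X. Cv i x * mv i x) - (\<Sum>x\<in>X. mv i x * (\<Sum>e\<in>nbr E i. lam e i x))
       + (\<Sum>x\<in>X. mv i x * ln (mv i x)) / \<eta>"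
proof -
  have weights: "(\<Sum>x\<in>X. mv i x * ln (wV E Cv \<eta> lam i x))
      = \<eta> * (\<Sum>x\<in>X. mv i x * (\<Sum>e\<in>nbr E i. lam e i x)) - \<eta> * (\<Sum>x\<in>X. Cv i x * mv i x)"
    by (simp add: wV_def algebra_simps sum_subtractf sum_distrib_left)
  show ?thesis
    unfolding vertex_free_energy_def fst_conv weights using eta_pos by (simp add: field_simps)
qed

lemma edge_free_energy_eq:
  "- (1/\<eta>) * edge_free_energy lam (mv, me) e
     = (\<Sum>x\<in>X. \<Sum>y\<in>X. Ce e x y * me e x y)
       + (\<Sum>x\<in>X. \<Sum>y\<in>X. me e x y * (lam e (fst e) x + lam e (snd e) y))
       + (\<Sum>x\<in>X. \<Sum>y\<in>X. me e x y * ln (me e x y)) / \<eta>"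
proof -
  have weights: "(\<Sum>x\<in>X. \<Sum>y\<in>X. me e x y * ln (wE Ce \<eta> lam e x y))
      = - \<eta> * (\<Sum>x\<in>X. \<Sum>y\<in>X. Ce e x y * me e x y)
        - \<eta> * (\<Sum>x\<in>X. \<Sum>y\<in>X. me e x y * (lam e (fst e) x + lam e (snd e) y))"
    by (simp add: wE_def algebra_simps sum_subtractf sum_distrib_left sum.distrib)
  show ?thesis
    unfolding edge_free_energy_def snd_conv weights using eta_pos by (simp add: field_simps)
qed

lemma dual_pairing_eq:
  "(\<Sum>e\<in>E. \<Sum>x\<in>X. \<Sum>y\<in>X. me e x y * (lam e (fst e) x + lam e (snd e) y))
     - (\<Sum>i\<in>V. \<Sum>x\<in>X. mv i x * (\<Sum>e\<in>nbr E i. lam e i x))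
   = (\<Sum>e\<in>E. \<Sum>i\<in>ends e. \<Sum>x\<in>X. lam e i x * (edge_marg me X e i x - mv i x))"
proof -
  have vertex: "(\<Sum>i\<in>V. \<Sum>x\<in>X. mv i x * (\<Sum>e\<in>nbr E i. lam e i x))
      = (\<Sum>e\<in>E. \<Sum>i\<in>ends e. \<Sum>x\<in>X. lam e i x * mv i x)"
    unfolding sum_nbr_eq_sum_ends[symmetric]
    by (intro sum.cong refl) (simp add: sum_distrib_left mult.commute sum.swap[of _ "nbr E _" X])
  have edge: "(\<Sum>x\<in>X. \<Sum>y\<in>X. me e x y * (lam e (fst e) x + lam e (snd e) y))
      = (\<Sum>i\<in>ends e. \<Sum>x\<in>X. lam e i x * edge_marg me X e i x)" if e: "e \<in> E" for e
  proof -
    have "(\<Sum>x\<in>X. \<Sum>y\<in>X. me e x y * (lam e (fst e) x + lam e (snd e) y))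
        = (\<Sum>x\<in>X. \<Sum>y\<in>X. me e x y * lam e (fst e) x) + (\<Sum>y\<in>X. \<Sum>x\<in>X. me e x y * lam e (snd e) y)"
      by (simp add: distrib_left sum.distrib) (rule sum.swap)
    also have "\<dots> = (\<Sum>x\<in>X. (\<Sum>y\<in>X. me e x y) * lam e (fst e) x)
        + (\<Sum>x\<in>X. (\<Sum>y\<in>X. me e y x) * lam e (snd e) x)"
      by (simp add: sum_distrib_right)
    also have "\<dots> = (\<Sum>x\<in>X. lam e (fst e) x * edge_marg me X e (fst e) x)
        + (\<Sum>x\<in>X. lam e (snd e) x * edge_marg me X e (snd e) x)"
      using fst_ne_snd[OF e] by (simp add: edge_marg_def mult.commute)
    finally show ?thesis by (simp add: sum_ends[OF e])
  qed
  show ?thesis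
    by (simp add: vertex edge sum_subtractf[symmetric] right_diff_distrib)
qed

lemma lagrangian_eq_free_energy:
  "lagrangian lam mu = - (1/\<eta>) * ((\<Sum>i\<in>V. vertex_free_energy lam mu i)
                                    + (\<Sum>e\<in>E. edge_free_energy lam mu e))"
proof -
  obtain mv me where mu: "mu = (mv, me)" by (cases mu)
  have "- (1/\<eta>) * ((\<Sum>i\<in>V. vertex_free_energy lam mu i) + (\<Sum>e\<in>E. edge_free_energy lam mu e))
      = (\<Sum>i\<in>V. - (1/\<eta>) * vertex_free_energy lam mu i) + (\<Sum>e\<in>E. - (1/\<eta>) * edge_free_energy lam mu e)"
    by (simp add: sum_distrib_left distrib_left)
  also have "\<dots> = primal mu + neg_entropy mu / \<eta>
      + ((\<Sum>e\<in>E. \<Sum>x\<in>X. \<Sum>y\<in>X. me e x y * (lam e (fst e) x + lam e (snd e) y))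
         - (\<Sum>i\<in>V. \<Sum>x\<in>X. mv i x * (\<Sum>e\<in>nbr E i. lam e i x)))"
    unfolding mu vertex_free_energy_eq edge_free_energy_eq
    by (simp add: cost_def neg_entropy_def sum.distrib sum_subtractf sum_divide_distrib
        add_divide_distrib algebra_simps)
  finally show ?thesis by (simp add: lagrangian_def mu dual_pairing_eq)
qed

lemma dual_obj_le_lagrangian:
  assumes "prob_tables mu"
  shows "dual_obj lam \<le> lagrangian lam mu"
proof -
  obtain mv me where mu: "mu = (mv, me)" by (cases mu)
  have "vertex_free_energy lam mu i \<le> ln (Zv lam i)" if "i \<in> V" for i
    using gibbs_inequality[OF finite_X, of "mv i" "wV E Cv \<eta> lam i"] wV_pos assms that
    by (auto simp: vertex_free_energy_def mu prob_tables_def)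
  moreover have "edge_free_energy lam mu e \<le> ln (Ze lam e)" if "e \<in> E" for e
    using gibbs_inequality[of "X \<times> X" "\<lambda>p. me e (fst p) (snd p)" "\<lambda>p. wE Ce \<eta> lam e (fst p) (snd p)"]
      finite_X wE_pos assms that
    by (auto simp: edge_free_energy_def mu prob_tables_def sum.cartesian_product split_beta)
  ultimately have "(\<Sum>i\<in>V. vertex_free_energy lam mu i) + (\<Sum>e\<in>E. edge_free_energy lam mu e)
      \<le> (\<Sum>i\<in>V. ln (Zv lam i)) + (\<Sum>e\<in>E. ln (Ze lam e))"
    by (intro add_mono sum_mono) auto
  then show ?thesis
    using eta_pos by (simp add: lagrangian_eq_free_energy dual_obj_def divide_right_mono)
qed

lemma lagrangian_gibbs: "lagrangian lam (gibbs lam) = dual_obj lam"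
proof -
  have "vertex_free_energy lam (gibbs lam) i = ln (Zv lam i)" for i
    using gibbs_equality[OF finite_X, of "wV E Cv \<eta> lam i"] wV_pos X_ne
    by (simp add: vertex_free_energy_def gibbs_def muV_def)
  moreover have "edge_free_energy lam (gibbs lam) e = ln (Ze lam e)" for e
  proof -
    have "(\<Sum>p\<in>X \<times> X. wE Ce \<eta> lam e (fst p) (snd p) / Ze lam e * ln (wE Ce \<eta> lam e (fst p) (snd p)))
      - (\<Sum>p\<in>X \<times> X. wE Ce \<eta> lam e (fst p) (snd p) / Ze lam e
           * ln (wE Ce \<eta> lam e (fst p) (snd p) / Ze lam e)) = ln (Ze lam e)"
      using gibbs_equality[of "X \<times> X" "\<lambda>p. wE Ce \<eta> lam e (fst p) (snd p)"] finite_X wE_pos X_ne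
      by auto
    then show ?thesis
      by (simp add: edge_free_energy_def gibbs_def muE_def sum.cartesian_product split_beta)
  qed
  ultimately show ?thesis by (simp add: lagrangian_eq_free_energy dual_obj_def)
qed

lemma prob_tables_gibbs: "prob_tables (gibbs lam)"
  unfolding prob_tables_def gibbs_def using mu_v_pos mu_e_pos sum_mu_v sum_mu_e
  by (auto intro: less_imp_le)

lemma neg_entropy_nonpos:
  assumes "prob_tables mu"
  shows "neg_entropy mu \<le> 0"
proof -
  obtain mv me where mu: "mu = (mv, me)" by (cases mu)
  have "mv i x \<le> 1" if "i \<in> V" "x \<in> X" for i x
    using assms that finite_X member_le_sum[of x X "mv i"] by (auto simp: mu prob_tables_def)
  moreover have "me e x y \<le> 1" if "e \<in> E" "x \<in> X" "y \<in> X" for e x y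
  proof -
    have "me e x y \<le> (\<Sum>y\<in>X. me e x y)"
      using assms that finite_X by (intro member_le_sum) (auto simp: mu prob_tables_def)
    also have "\<dots> \<le> (\<Sum>x\<in>X. \<Sum>y\<in>X. me e x y)"
      using assms that finite_X
      by (intro member_le_sum[of x X "\<lambda>x. \<Sum>y\<in>X. me e x y"]) (auto simp: mu prob_tables_def intro: sum_nonneg)
    finally show ?thesis using assms that by (simp add: mu prob_tables_def)
  qed
  ultimately show ?thesis
    using assms unfolding neg_entropy_def mu prob_tables_def
    by (intro add_nonpos_nonpos sum_nonpos mult_ln_self_nonpos) auto
qed

lemma neg_entropy_ge:
  assumes "prob_tables mu"
  shows "- neg_entropy mu \<le> (real (card V) + 2 * real (card E)) * ln d"
proof -
  obtain mv me where mu: "mu = (mv, me)" by (cases mu)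
  have "- (\<Sum>x\<in>X. mv i x * ln (mv i x)) \<le> ln d" if "i \<in> V" for i
    using entropy_le_ln_card[OF finite_X, of "mv i"] assms that by (auto simp: mu prob_tables_def)
  moreover have "- (\<Sum>x\<in>X. \<Sum>y\<in>X. me e x y * ln (me e x y)) \<le> 2 * ln d" if "e \<in> E" for e
  proof -
    have "- (\<Sum>p\<in>X\<times>X. me e (fst p) (snd p) * ln (me e (fst p) (snd p))) \<le> ln (real (card (X \<times> X)))"
      using entropy_le_ln_card[of "X \<times> X" "\<lambda>p. me e (fst p) (snd p)"] finite_X assms that
      by (auto simp: mu prob_tables_def sum.cartesian_product split_beta)
    then show ?thesis
      using d_pos by (simp add: sum.cartesian_product split_beta card_cartesian_product ln_mult)
  qed
  ultimately have "(\<Sum>i\<in>V. - (\<Sum>x\<in>X. mv i x * ln (mv i x)))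
      + (\<Sum>e\<in>E. - (\<Sum>x\<in>X. \<Sum>y\<in>X. me e x y * ln (me e x y))) \<le> (\<Sum>i\<in>V. ln d) + (\<Sum>e\<in>E. 2 * ln d)"
    by (intro add_mono sum_mono) auto
  then show ?thesis by (simp add: neg_entropy_def mu sum_negf algebra_simps)
qed

lemma L2_imp_prob_tables:
  assumes "mu \<in> L2 V E X"
  shows "prob_tables mu"
proof -
  obtain mv me where mu: "mu = (mv, me)" by (cases mu)
  have "(\<Sum>x\<in>X. \<Sum>y\<in>X. me e x y) = 1" if "e \<in> E" for e
    using assms that ends_in_V[OF that] unfolding mu L2_def by auto
  then show ?thesis using assms unfolding mu L2_def prob_tables_def by auto
qed

lemma L2_edge_marg:
  "mu \<in> L2 V E X \<Longrightarrow> e \<in> E \<Longrightarrow> i \<in> ends e \<Longrightarrow> x \<in> X \<Longrightarrow> edge_marg (snd mu) X e i x = fst mu i x"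
  unfolding L2_def edge_marg_def ends_def by auto

theorem weak_duality:
  assumes "mu \<in> L2 V E X"
  shows "dual_obj lam \<le> primal mu"
proof -
  have "dual_obj lam \<le> lagrangian lam mu"
    using assms by (intro dual_obj_le_lagrangian L2_imp_prob_tables)
  also have "\<dots> = primal mu + neg_entropy mu / \<eta>"
    using L2_edge_marg[OF assms] by (simp add: lagrangian_def)
  also have "\<dots> \<le> primal mu"
    using neg_entropy_nonpos[OF L2_imp_prob_tables[OF assms]] eta_pos by (simp add: divide_nonpos_pos)
  finally show ?thesis .
qed

section \<open>Primal cost of the rounded Gibbs tables\<close>

lemma abs_Cv_le_Cmax: "i \<in> V \<Longrightarrow> x \<in> X \<Longrightarrow> \<bar>Cv i x\<bar> \<le> Cmax"
  and abs_Ce_le_Cmax: "e \<in> E \<Longrightarrow> x \<in> X \<Longrightarrow> y \<in> X \<Longrightarrow> \<bar>Ce e x y\<bar> \<le> Cmax"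
proof -
  have "{\<bar>Cv i x\<bar> | i x. i \<in> V \<and> x \<in> X} = (\<lambda>(i, x). \<bar>Cv i x\<bar>) ` (V \<times> X)"
    and "{\<bar>Ce e x y\<bar> | e x y. e \<in> E \<and> x \<in> X \<and> y \<in> X} = (\<lambda>(e, x, y). \<bar>Ce e x y\<bar>) ` (E \<times> X \<times> X)"
    by force+
  then have fin: "finite ({\<bar>Cv i x\<bar> | i x. i \<in> V \<and> x \<in> X}
                         \<union> {\<bar>Ce e x y\<bar> | e x y. e \<in> E \<and> x \<in> X \<and> y \<in> X})"
    using finite_V finite_E finite_X by simp
  show "i \<in> V \<Longrightarrow> x \<in> X \<Longrightarrow> \<bar>Cv i x\<bar> \<le> Cmax"
    unfolding Cnorm_def by (rule Max_ge[OF fin]) blast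
  show "e \<in> E \<Longrightarrow> x \<in> X \<Longrightarrow> y \<in> X \<Longrightarrow> \<bar>Ce e x y\<bar> \<le> Cmax"
    unfolding Cnorm_def by (rule Max_ge[OF fin]) blast
qed

lemma Cmax_nonneg: "Cmax \<ge> 0"
proof -
  obtain i x where "i \<in> V" "x \<in> X" using V_ne X_ne by blast
  then show ?thesis using abs_Cv_le_Cmax by (meson abs_ge_zero order_trans)
qed

lemma abs_primal_le:
  assumes "prob_tables mu"
  shows "\<bar>primal mu\<bar> \<le> (real (card V) + real (card E)) * Cmax"
proof -
  obtain mv me where mu: "mu = (mv, me)" by (cases mu)
  have "\<bar>\<Sum>x\<in>X. Cv i x * mv i x\<bar> \<le> Cmax" if "i \<in> V" for i
  proof -
    have "\<bar>\<Sum>x\<in>X. Cv i x * mv i x\<bar> \<le> (\<Sum>x\<in>X. Cmax * mv i x)"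
      using assms that abs_Cv_le_Cmax[OF that]
      by (intro order_trans[OF sum_abs] sum_mono)
         (simp add: mu prob_tables_def abs_mult mult_right_mono)
    also have "\<dots> = Cmax" using assms that by (simp add: mu prob_tables_def sum_distrib_left[symmetric])
    finally show ?thesis .
  qed
  moreover have "\<bar>\<Sum>x\<in>X. \<Sum>y\<in>X. Ce e x y * me e x y\<bar> \<le> Cmax" if "e \<in> E" for e
  proof -
    have "\<bar>\<Sum>x\<in>X. \<Sum>y\<in>X. Ce e x y * me e x y\<bar> \<le> (\<Sum>x\<in>X. \<Sum>y\<in>X. \<bar>Ce e x y * me e x y\<bar>)"
      by (rule order_trans[OF sum_abs sum_mono[OF sum_abs]])
    also have "\<dots> \<le> (\<Sum>x\<in>X. \<Sum>y\<in>X. Cmax * me e x y)"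
      using assms that abs_Ce_le_Cmax[OF that]
      by (intro sum_mono) (simp add: mu prob_tables_def abs_mult mult_right_mono)
    also have "\<dots> = Cmax" using assms that by (simp add: mu prob_tables_def sum_distrib_left[symmetric])
    finally show ?thesis .
  qed
  ultimately have "(\<Sum>i\<in>V. \<bar>\<Sum>x\<in>X. Cv i x * mv i x\<bar>) + (\<Sum>e\<in>E. \<bar>\<Sum>x\<in>X. \<Sum>y\<in>X. Ce e x y * me e x y\<bar>)
      \<le> (\<Sum>i\<in>V. Cmax) + (\<Sum>e\<in>E. Cmax)"
    by (intro add_mono sum_mono) auto
  moreover have "\<bar>primal mu\<bar> \<le> (\<Sum>i\<in>V. \<bar>\<Sum>x\<in>X. Cv i x * mv i x\<bar>)
      + (\<Sum>e\<in>E. \<bar>\<Sum>x\<in>X. \<Sum>y\<in>X. Ce e x y * me e x y\<bar>)"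
    unfolding cost_def mu fst_conv snd_conv
    by (rule order_trans[OF abs_triangle_ineq add_mono[OF sum_abs sum_abs]])
  ultimately show ?thesis by (simp add: algebra_simps)
qed

text \<open>Tables with the same slack as the Gibbs tables of \<open>lam\<close> see the same dual term in the
  Lagrangian, whose minimiser the Gibbs tables are.\<close>

lemma primal_gibbs_le_of_same_slack:
  assumes pt: "prob_tables mu"
    and slack: "\<And>e i x. e \<in> E \<Longrightarrow> i \<in> ends e \<Longrightarrow> x \<in> X \<Longrightarrow>
                  edge_marg (snd mu) X e i x - fst mu i x = nu lam e i x"
  shows "primal (gibbs lam) \<le> primal mu + (real (card V) + 2 * real (card E)) * ln d / \<eta>"
proof -
  define B where "B = (\<Sum>e\<in>E. \<Sum>i\<in>ends e. \<Sum>x\<in>X. lam e i x * nu lam e i x)"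
  have "lagrangian lam mu = primal mu + neg_entropy mu / \<eta> + B"
    unfolding lagrangian_def B_def using slack by simp
  moreover have "lagrangian lam (gibbs lam) = primal (gibbs lam) + neg_entropy (gibbs lam) / \<eta> + B"
    unfolding lagrangian_def B_def by (simp add: gibbs_def slack_def marg_eq_edge_marg)
  moreover have "lagrangian lam (gibbs lam) \<le> lagrangian lam mu"
    unfolding lagrangian_gibbs by (rule dual_obj_le_lagrangian[OF pt])
  moreover have "neg_entropy mu / \<eta> \<le> 0"
    using neg_entropy_nonpos[OF pt] eta_pos by (simp add: divide_nonpos_pos)
  moreover have "- neg_entropy (gibbs lam) / \<eta> \<le> (real (card V) + 2 * real (card E)) * ln d / \<eta>"
    using divide_right_mono[OF neg_entropy_ge[OF prob_tables_gibbs], of \<eta>] eta_pos by simp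
  ultimately show ?thesis by (simp add: algebra_simps)
qed

lemma primal_mix_le:
  assumes "prob_tables (mv, me)" and "prob_tables (uv, ue)" and "0 \<le> t"
  shows "primal (\<lambda>i x. (1 - t) * mv i x + t * uv i x, \<lambda>e x y. (1 - t) * me e x y + t * ue e x y)
           \<le> primal (mv, me) + 2 * t * (real (card V) + real (card E)) * Cmax"
proof -
  have "primal (uv, ue) - primal (mv, me) \<le> 2 * (real (card V) + real (card E)) * Cmax"
    using abs_primal_le[OF assms(1)] abs_primal_le[OF assms(2)] by (simp add: abs_le_iff algebra_simps)
  then have "t * (primal (uv, ue) - primal (mv, me)) \<le> t * (2 * (real (card V) + real (card E)) * Cmax)"
    using assms(3) by (rule mult_left_mono)
  then show ?thesis unfolding cost_convex_comb by (simp add: algebra_simps)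
qed

lemma uniform_plus_scaled_slack:
  assumes t0: "0 < t"
    and small: "\<And>e i x. e \<in> E \<Longrightarrow> i \<in> ends e \<Longrightarrow> x \<in> X \<Longrightarrow> d * \<bar>nu lam e i x\<bar> \<le> t"
  shows "\<And>e i x. e \<in> E \<Longrightarrow> i \<in> ends e \<Longrightarrow> x \<in> X \<Longrightarrow> 0 \<le> 1 / d + nu lam e i x / t"
    and "(\<Sum>x\<in>X. 1 / d + nu lam e i x / t) = 1"
proof -
  show "0 \<le> 1 / d + nu lam e i x / t" if "e \<in> E" "i \<in> ends e" "x \<in> X" for e i x
  proof -
    have "- nu lam e i x * d \<le> \<bar>nu lam e i x\<bar> * d" using d_pos by (intro mult_right_mono) auto
    also have "\<dots> \<le> t" using small[OF that] by (simp add: mult.commute)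
    finally show ?thesis using t0 d_pos by (simp add: field_simps)
  qed
  show "(\<Sum>x\<in>X. 1 / d + nu lam e i x / t) = 1"
    using d_pos by (simp add: sum.distrib sum_divide_distrib[symmetric] sum_nu)
qed

text \<open>The witness is \<open>(1 - t) mu + t U\<close>, where \<open>U\<close> has uniform vertex tables and edge tables
  \<open>a \<otimes> b\<close> with \<open>a = 1/d + nu/t\<close> at either end: the slack of \<open>U\<close> is \<open>nu / t\<close>, that of \<open>mu\<close> is 0.\<close>

lemma prob_tables_with_gibbs_slack:
  assumes m: "mu \<in> L2 V E X" and t0: "0 < t" and t1: "t \<le> 1"
    and small: "\<And>e i x. e \<in> E \<Longrightarrow> i \<in> ends e \<Longrightarrow> x \<in> X \<Longrightarrow> d * \<bar>nu lam e i x\<bar> \<le> t"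
  obtains mu' where "prob_tables mu'"
    and "\<And>e i x. e \<in> E \<Longrightarrow> i \<in> ends e \<Longrightarrow> x \<in> X \<Longrightarrow>
           edge_marg (snd mu') X e i x - fst mu' i x = nu lam e i x"
    and "primal mu' \<le> primal mu + 2 * t * (real (card V) + real (card E)) * Cmax"
proof -
  obtain mv me where mu: "mu = (mv, me)" by (cases mu)
  define a where "a = (\<lambda>e x. 1 / d + nu lam e (fst e) x / t)"
  define b where "b = (\<lambda>e y. 1 / d + nu lam e (snd e) y / t)"
  define mu' :: pseudo where
    "mu' = (\<lambda>i x. (1 - t) * mv i x + t * (1 / d), \<lambda>e x y. (1 - t) * me e x y + t * (a e x * b e y))"
  note ab = uniform_plus_scaled_slack[OF t0 small]
  have a0: "e \<in> E \<Longrightarrow> x \<in> X \<Longrightarrow> 0 \<le> a e x" and b0: "e \<in> E \<Longrightarrow> x \<in> X \<Longrightarrow> 0 \<le> b e x" for e x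
    unfolding a_def b_def by (auto intro!: ab(1) simp: ends_def)
  have sum_a: "(\<Sum>x\<in>X. a e x) = 1" for e unfolding a_def by (rule ab(2))
  have sum_b: "(\<Sum>x\<in>X. b e x) = 1" for e unfolding b_def by (rule ab(2))
  have sum_unif: "(\<Sum>x\<in>X. 1 / d) = 1" using d_pos by simp
  have pmu: "prob_tables mu" using m by (rule L2_imp_prob_tables)
  have pU: "prob_tables (\<lambda>i x. 1 / d, \<lambda>e x y. a e x * b e y)"
    using d_pos a0 b0 sum_unif by (simp add: prob_tables_def sum_product[symmetric] sum_a sum_b)
  show ?thesis
  proof
    show "prob_tables mu'"
      using pmu t1 t0 d_pos a0 b0 unfolding prob_tables_def mu'_def
      by (auto simp: sum.distrib sum_distrib_left[symmetric] sum_product[symmetric] sum_a sum_b sum_unif mu)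
  next
    fix e i x assume e: "e \<in> E" and i: "i \<in> ends e" and x: "x \<in> X"
    have marg_mu: "edge_marg me X e i x = mv i x" using L2_edge_marg[OF m e i x] by (simp add: mu)
    show "edge_marg (snd mu') X e i x - fst mu' i x = nu lam e i x"
    proof (cases "i = fst e")
      case True
      then have "edge_marg (snd mu') X e i x = (1 - t) * edge_marg me X e i x + t * a e x"
        by (simp add: edge_marg_def mu'_def sum.distrib sum_distrib_left[symmetric] sum_b)
      with True t0 marg_mu show ?thesis by (simp add: mu'_def a_def algebra_simps)
    next
      case False
      then have snd: "i = snd e" using i by (auto simp: ends_def)
      have "edge_marg (snd mu') X e i x = (1 - t) * edge_marg me X e i x + t * b e x"
        using False
        by (simp add: edge_marg_def mu'_def sum.distrib sum_distrib_left[symmetric]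
            sum_distrib_right[symmetric] sum_a)
      with snd t0 marg_mu show ?thesis by (simp add: mu'_def b_def algebra_simps)
    qed
  next
    show "primal mu' \<le> primal mu + 2 * t * (real (card V) + real (card E)) * Cmax"
      using primal_mix_le[OF pmu[unfolded mu] pU] t0 by (simp add: mu'_def mu)
  qed
qed

lemma primal_gibbs_le:
  assumes "mu \<in> L2 V E X" and "0 < t" and "t \<le> 1"
    and "\<And>e i x. e \<in> E \<Longrightarrow> i \<in> ends e \<Longrightarrow> x \<in> X \<Longrightarrow> d * \<bar>nu lam e i x\<bar> \<le> t"
  shows "primal (gibbs lam) \<le> primal mu + (real (card V) + 2 * real (card E)) * ln d / \<eta>
           + 2 * t * (real (card V) + real (card E)) * Cmax"
proof -
  obtain mu' where "prob_tables mu'"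
    and "\<And>e i x. e \<in> E \<Longrightarrow> i \<in> ends e \<Longrightarrow> x \<in> X \<Longrightarrow>
           edge_marg (snd mu') X e i x - fst mu' i x = nu lam e i x"
    and "primal mu' \<le> primal mu + 2 * t * (real (card V) + real (card E)) * Cmax"
    using prob_tables_with_gibbs_slack[OF assms] by blast
  with primal_gibbs_le_of_same_slack show ?thesis by fastforce
qed

definition slack_l1 :: "dual \<Rightarrow> edge \<Rightarrow> nat \<Rightarrow> real" where
  "slack_l1 lam e i = (\<Sum>x\<in>X. \<bar>nu lam e i x\<bar>)"

lemma slack_sq_eq: "slack_sq lam = (\<Sum>e\<in>E. \<Sum>i\<in>ends e. (slack_l1 lam e i)\<^sup>2)"
  by (simp add: slack_obj_def slack_l1_def)

lemma slack_sq_nonneg: "slack_sq lam \<ge> 0"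
  unfolding slack_sq_eq by (intro sum_nonneg) auto

lemma slack_l1_sq_le_slack_sq:
  assumes "e \<in> E" "i \<in> ends e"
  shows "(slack_l1 lam e i)\<^sup>2 \<le> slack_sq lam"
proof -
  have "(slack_l1 lam e i)\<^sup>2 \<le> (\<Sum>i\<in>ends e. (slack_l1 lam e i)\<^sup>2)"
    using assms by (intro member_le_sum) (auto simp: ends_def)
  also have "\<dots> \<le> slack_sq lam"
    unfolding slack_sq_eq using assms finite_E
    by (intro member_le_sum[of e E "\<lambda>e. \<Sum>i\<in>ends e. (slack_l1 lam e i)\<^sup>2"]) (auto intro: sum_nonneg)
  finally show ?thesis .
qed

lemma abs_nu_le_slack_l1: "x \<in> X \<Longrightarrow> \<bar>nu lam e i x\<bar> \<le> slack_l1 lam e i"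
  unfolding slack_l1_def using finite_X by (intro member_le_sum[of x X "\<lambda>x. \<bar>nu lam e i x\<bar>"]) auto

lemma round_gibbs_props:
  fixes lam :: dual
  assumes e: "e \<in> E"
  defines "R \<equiv> round_map X (mu_e lam e) (mu_v lam (fst e)) (mu_v lam (snd e))"
  shows "\<forall>x\<in>X. \<forall>y\<in>X. R x y \<ge> 0" and "\<forall>x\<in>X. (\<Sum>y\<in>X. R x y) = mu_v lam (fst e) x"
    and "\<forall>y\<in>X. (\<Sum>x\<in>X. R x y) = mu_v lam (snd e) y"
    and "(\<Sum>x\<in>X. \<Sum>y\<in>X. \<bar>R x y - mu_e lam e x y\<bar>) \<le> 3 * (\<Sum>i\<in>ends e. slack_l1 lam e i)"
proof -
  note props = round_map_props[OF finite_X, of "mu_e lam e" "mu_v lam (fst e)" "mu_v lam (snd e)",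
      folded R_def, OF less_imp_le[OF mu_e_pos] less_imp_le[OF mu_v_pos] less_imp_le[OF mu_v_pos]]
  show "\<forall>x\<in>X. \<forall>y\<in>X. R x y \<ge> 0" "\<forall>x\<in>X. (\<Sum>y\<in>X. R x y) = mu_v lam (fst e) x"
    "\<forall>y\<in>X. (\<Sum>x\<in>X. R x y) = mu_v lam (snd e) y"
    using props(1-3) by (simp_all add: sum_mu_v)
  have "slack_l1 lam e (fst e) = (\<Sum>x\<in>X. \<bar>(\<Sum>y\<in>X. mu_e lam e x y) - mu_v lam (fst e) x\<bar>)"
    and "slack_l1 lam e (snd e) = (\<Sum>y\<in>X. \<bar>(\<Sum>x\<in>X. mu_e lam e x y) - mu_v lam (snd e) y\<bar>)"
    using fst_ne_snd[OF e] by (simp_all add: slack_l1_def slack_def Smarg_def)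
  then show "(\<Sum>x\<in>X. \<Sum>y\<in>X. \<bar>R x y - mu_e lam e x y\<bar>) \<le> 3 * (\<Sum>i\<in>ends e. slack_l1 lam e i)"
    using props(4) by (simp add: sum_mu_v sum_ends[OF e])
qed

lemma Proj_in_L2: "Proj E X Cv Ce \<eta> lam \<in> L2 V E X"
  using round_gibbs_props(1-3) mu_v_pos sum_mu_v
  by (auto simp: Proj_def L2_def intro: less_imp_le)

lemma primal_Proj_le:
  "primal (Proj E X Cv Ce \<eta> lam)
     \<le> primal (gibbs lam) + 3 * Cmax * (\<Sum>e\<in>E. \<Sum>i\<in>ends e. slack_l1 lam e i)"
proof -
  define R where "R = (\<lambda>e. round_map X (mu_e lam e) (mu_v lam (fst e)) (mu_v lam (snd e)))"
  have "primal (Proj E X Cv Ce \<eta> lam) - primal (gibbs lam)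
      = (\<Sum>e\<in>E. \<Sum>x\<in>X. \<Sum>y\<in>X. Ce e x y * (R e x y - mu_e lam e x y))"
    by (simp add: Proj_def gibbs_def cost_def R_def sum_subtractf right_diff_distrib)
  also have "\<dots> \<le> (\<Sum>e\<in>E. Cmax * (3 * (\<Sum>i\<in>ends e. slack_l1 lam e i)))"
  proof (rule sum_mono)
    fix e assume e: "e \<in> E"
    have "(\<Sum>x\<in>X. \<Sum>y\<in>X. Ce e x y * (R e x y - mu_e lam e x y))
        \<le> (\<Sum>x\<in>X. \<Sum>y\<in>X. Cmax * \<bar>R e x y - mu_e lam e x y\<bar>)"
    proof (intro sum_mono)
      fix x y assume "x \<in> X" "y \<in> X"
      have "Ce e x y * (R e x y - mu_e lam e x y) \<le> \<bar>Ce e x y\<bar> * \<bar>R e x y - mu_e lam e x y\<bar>"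
        by (metis abs_ge_self abs_mult)
      also have "\<dots> \<le> Cmax * \<bar>R e x y - mu_e lam e x y\<bar>"
        using abs_Ce_le_Cmax[OF e \<open>x \<in> X\<close> \<open>y \<in> X\<close>] by (intro mult_right_mono) auto
      finally show "Ce e x y * (R e x y - mu_e lam e x y) \<le> Cmax * \<bar>R e x y - mu_e lam e x y\<bar>" .
    qed
    also have "\<dots> \<le> Cmax * (3 * (\<Sum>i\<in>ends e. slack_l1 lam e i))"
      using round_gibbs_props(4)[OF e, of lam] Cmax_nonneg
      by (simp add: R_def sum_distrib_left[symmetric] mult_left_mono)
    finally show "(\<Sum>x\<in>X. \<Sum>y\<in>X. Ce e x y * (R e x y - mu_e lam e x y))
        \<le> Cmax * (3 * (\<Sum>i\<in>ends e. slack_l1 lam e i))" .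
  qed
  also have "\<dots> = 3 * Cmax * (\<Sum>e\<in>E. \<Sum>i\<in>ends e. slack_l1 lam e i)"
    by (simp add: sum_distrib_left algebra_simps)
  finally show ?thesis by simp
qed

text \<open>For every \<open>s > 0\<close>, AM-GM bounds each \<open>slack_l1\<close> by \<open>(slack_sq lam / s + s) / 2\<close>;
  \<open>s\<close> is tuned at the very end.\<close>

lemma primal_Proj_le_slack_sq:
  assumes m: "mu \<in> L2 V E X" and s: "s > 0"
  shows "primal (Proj E X Cv Ce \<eta> lam) \<le> primal mu
     + (real (card V) + 2 * real (card E)) * ln d / \<eta>
     + Cmax * (2 * d * (real (card V) + real (card E)) + 6 * real (card E))
       * ((slack_sq lam / s + s) / 2)"
proof -
  define r where "r = (slack_sq lam / s + s) / 2"
  define H where "H = (real (card V) + 2 * real (card E)) * ln d / \<eta>"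
  define nm where "nm = real (card V) + real (card E)"
  have "H \<ge> 0" unfolding H_def using eta_pos card_X by simp
  have r0: "r > 0" unfolding r_def using s slack_sq_nonneg[of lam] by (simp add: add_nonneg_pos)
  have le_r: "slack_l1 lam e i \<le> r" if "e \<in> E" "i \<in> ends e" for e i
  proof -
    have "(slack_l1 lam e i)\<^sup>2 / s \<le> slack_sq lam / s"
      using slack_l1_sq_le_slack_sq[OF that] s by (simp add: divide_right_mono)
    then show ?thesis using le_amgm_sq_div[OF s, of "slack_l1 lam e i"] by (simp add: r_def)
  qed
  have sum_le: "(\<Sum>e\<in>E. \<Sum>i\<in>ends e. slack_l1 lam e i) \<le> 2 * real (card E) * r"
  proof -
    have "(\<Sum>e\<in>E. \<Sum>i\<in>ends e. slack_l1 lam e i) \<le> (\<Sum>e\<in>E. \<Sum>i\<in>ends e. r)"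
      using le_r by (intro sum_mono) auto
    then show ?thesis by (simp add: card_ends)
  qed
  have gibbs_le: "primal (gibbs lam) \<le> primal mu + H + 2 * (d * r) * nm * Cmax"
  proof (cases "d * r \<le> 1")
    case True
    have "d * \<bar>nu lam e i x\<bar> \<le> d * r" if "e \<in> E" "i \<in> ends e" "x \<in> X" for e i x
      using order_trans[OF abs_nu_le_slack_l1[OF that(3)] le_r[OF that(1,2)]] d_pos by simp
    then show ?thesis
      using primal_gibbs_le[OF m _ True] r0 d_pos by (simp add: H_def nm_def)
  next
    case False
    have "0 \<le> nm * Cmax" using Cmax_nonneg by (simp add: nm_def)
    then have "1 * (nm * Cmax) \<le> (d * r) * (nm * Cmax)"
      using False by (intro mult_right_mono) auto
    moreover have "primal (gibbs lam) \<le> nm * Cmax" "- nm * Cmax \<le> primal mu"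
      using abs_primal_le[OF prob_tables_gibbs, of lam] abs_primal_le[OF L2_imp_prob_tables[OF m]]
      by (auto simp: nm_def abs_le_iff algebra_simps)
    ultimately show ?thesis using \<open>H \<ge> 0\<close> by (simp add: algebra_simps)
  qed
  have "primal (Proj E X Cv Ce \<eta> lam) \<le> primal (gibbs lam) + 3 * Cmax * (2 * real (card E) * r)"
    using primal_Proj_le[of lam] sum_le Cmax_nonneg by (meson add_left_mono mult_left_mono order_trans
        mult_nonneg_nonneg zero_le_numeral)
  with gibbs_le show ?thesis
    unfolding H_def[symmetric] r_def[symmetric] nm_def[symmetric] by (simp add: algebra_simps)
qed

section \<open>Improvement of the smoothed dual\<close>

lemma Zv_shift:
  assumes "\<And>x. x \<in> X \<Longrightarrow> (\<Sum>e\<in>nbr E i. lam' e i x) = (\<Sum>e\<in>nbr E i. lam e i x) + D x"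
  shows "Zv lam' i = Zv lam i * (\<Sum>x\<in>X. mu_v lam i x * exp (\<eta> * D x))"
proof -
  have "Zv lam' i = (\<Sum>x\<in>X. wV E Cv \<eta> lam i x * exp (\<eta> * D x))"
    by (intro sum.cong refl) (simp add: wV_def assms distrib_left exp_add[symmetric] algebra_simps)
  also have "\<dots> = (\<Sum>x\<in>X. Zv lam i * (mu_v lam i x * exp (\<eta> * D x)))"
    using Zv_pos[of lam i] by (intro sum.cong refl) (simp add: muV_def)
  finally show ?thesis by (simp add: sum_distrib_left)
qed

lemma Ze_shift:
  assumes e: "e \<in> E" and i: "i \<in> ends e"
    and shift: "\<And>x. x \<in> X \<Longrightarrow> lam' e i x = lam e i x + \<delta> x"
    and other: "\<And>j x. j \<in> ends e \<Longrightarrow> j \<noteq> i \<Longrightarrow> x \<in> X \<Longrightarrow> lam' e j x = lam e j x"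
  shows "Ze lam' e = Ze lam e * (\<Sum>x\<in>X. marg lam e i x * exp (- \<eta> * \<delta> x))"
proof (cases "i = fst e")
  case True
  have other': "x \<in> X \<Longrightarrow> lam' e (snd e) x = lam e (snd e) x" for x
    using other[of "snd e"] True fst_ne_snd[OF e] by (simp add: ends_def)
  have "Ze lam' e = (\<Sum>x\<in>X. \<Sum>y\<in>X. wE Ce \<eta> lam e x y * exp (- \<eta> * \<delta> x))"
    unfolding Ze_eq using True shift other'
    by (intro sum.cong refl) (simp add: wE_def exp_add[symmetric] algebra_simps)
  also have "\<dots> = (\<Sum>x\<in>X. \<Sum>y\<in>X. Ze lam e * (mu_e lam e x y * exp (- \<eta> * \<delta> x)))"
    using Ze_pos[of lam e] by (intro sum.cong refl) (simp add: muE_def)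
  also have "\<dots> = Ze lam e * (\<Sum>x\<in>X. (\<Sum>y\<in>X. mu_e lam e x y) * exp (- \<eta> * \<delta> x))"
    by (simp add: sum_distrib_left sum_distrib_right mult.assoc)
  finally show ?thesis using True by (simp add: Smarg_def)
next
  case False
  then have snd: "i = snd e" using i by (auto simp: ends_def)
  have other': "x \<in> X \<Longrightarrow> lam' e (fst e) x = lam e (fst e) x" for x
    using other[of "fst e"] False by (simp add: ends_def)
  have "Ze lam' e = (\<Sum>x\<in>X. \<Sum>y\<in>X. wE Ce \<eta> lam e x y * exp (- \<eta> * \<delta> y))"
    unfolding Ze_eq using snd shift other'
    by (intro sum.cong refl) (simp add: wE_def exp_add[symmetric] algebra_simps)
  also have "\<dots> = (\<Sum>y\<in>X. \<Sum>x\<in>X. wE Ce \<eta> lam e x y * exp (- \<eta> * \<delta> y))"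
    by (rule sum.swap)
  also have "\<dots> = (\<Sum>y\<in>X. \<Sum>x\<in>X. Ze lam e * (mu_e lam e x y * exp (- \<eta> * \<delta> y)))"
    using Ze_pos[of lam e] by (intro sum.cong refl) (simp add: muE_def)
  also have "\<dots> = Ze lam e * (\<Sum>y\<in>X. (\<Sum>x\<in>X. mu_e lam e x y) * exp (- \<eta> * \<delta> y))"
    by (simp add: sum_distrib_left sum_distrib_right mult.assoc)
  finally show ?thesis using False snd by (simp add: Smarg_def)
qed

lemma ln_Zv_shift_at_vertex:
  assumes N: "N \<subseteq> nbr E i"
    and lam': "\<And>e j x. lam' e j x = lam e j x + (if e \<in> N \<and> j = i then \<delta> e x else 0)"
  shows "ln (Zv lam' j) = ln (Zv lam j)
      + (if j = i then ln (\<Sum>x\<in>X. mu_v lam i x * exp (\<eta> * (\<Sum>e\<in>N. \<delta> e x))) else 0)"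
proof -
  have "(\<Sum>e\<in>nbr E j. lam' e j x)
      = (\<Sum>e\<in>nbr E j. lam e j x) + (if j = i then \<Sum>e\<in>N. \<delta> e x else 0)" for x
  proof -
    have "(\<Sum>e\<in>nbr E i. if e \<in> N then \<delta> e x else 0) = (\<Sum>e\<in>N. \<delta> e x)"
      using sum.inter_restrict[OF finite_nbr, of "\<lambda>e. \<delta> e x" i N] N by (simp add: Int_absorb1)
    then show ?thesis by (simp add: lam' sum.distrib)
  qed
  then have "Zv lam' j
      = Zv lam j * (\<Sum>x\<in>X. mu_v lam j x * exp (\<eta> * (if j = i then \<Sum>e\<in>N. \<delta> e x else 0)))"
    by (rule Zv_shift)
  moreover have "0 < (\<Sum>x\<in>X. mu_v lam i x * exp (\<eta> * (\<Sum>e\<in>N. \<delta> e x)))"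
    using finite_X X_ne mu_v_pos by (intro sum_pos) auto
  ultimately show ?thesis
    using Zv_pos[of lam j] by (cases "j = i") (simp_all add: ln_mult sum_mu_v)
qed

lemma ln_Ze_shift_at_vertex:
  assumes N: "N \<subseteq> nbr E i"
    and lam': "\<And>e j x. lam' e j x = lam e j x + (if e \<in> N \<and> j = i then \<delta> e x else 0)"
    and e: "e \<in> E"
  shows "ln (Ze lam' e) = ln (Ze lam e)
      + (if e \<in> N then ln (\<Sum>x\<in>X. marg lam e i x * exp (- \<eta> * \<delta> e x)) else 0)"
proof (cases "e \<in> N")
  case True
  then have "i \<in> ends e" using N by (auto simp: mem_nbr_iff)
  then have "Ze lam' e = Ze lam e * (\<Sum>x\<in>X. marg lam e i x * exp (- \<eta> * \<delta> e x))"
    using True by (intro Ze_shift[OF e]) (simp_all add: lam')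
  moreover have "0 < (\<Sum>x\<in>X. marg lam e i x * exp (- \<eta> * \<delta> e x))"
    using finite_X X_ne marg_pos by (intro sum_pos) auto
  ultimately show ?thesis using True Ze_pos[of lam e] by (simp add: ln_mult)
next
  case False
  have "Ze lam' e = Ze lam e * (\<Sum>x\<in>X. marg lam e (fst e) x * exp (- \<eta> * 0))"
    using False by (intro Ze_shift[OF e]) (simp_all add: lam' ends_def)
  then show ?thesis using False by (simp add: sum_marg)
qed

lemma dual_obj_shift_at_vertex:
  assumes i: "i \<in> V" and N: "N \<subseteq> nbr E i"
    and lam': "\<And>e j x. lam' e j x = lam e j x + (if e \<in> N \<and> j = i then \<delta> e x else 0)"
  shows "dual_obj lam' = dual_obj lam
    - (ln (\<Sum>x\<in>X. mu_v lam i x * exp (\<eta> * (\<Sum>e\<in>N. \<delta> e x)))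
       + (\<Sum>e\<in>N. ln (\<Sum>x\<in>X. marg lam e i x * exp (- \<eta> * \<delta> e x)))) / \<eta>"
proof -
  have "(\<Sum>e\<in>E. if e \<in> N then ln (\<Sum>x\<in>X. marg lam e i x * exp (- \<eta> * \<delta> e x)) else 0)
      = (\<Sum>e\<in>N. ln (\<Sum>x\<in>X. marg lam e i x * exp (- \<eta> * \<delta> e x)))"
  proof -
    have "N \<subseteq> E" using N nbr_subset by blast
    then show ?thesis
      using sum.inter_restrict[OF finite_E, of "\<lambda>e. ln (\<Sum>x\<in>X. marg lam e i x * exp (- \<eta> * \<delta> e x))" N]
      by (simp add: Int_absorb1)
  qed
  then have sum_edges: "(\<Sum>e\<in>E. ln (Ze lam' e)) = (\<Sum>e\<in>E. ln (Ze lam e))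
      + (\<Sum>e\<in>N. ln (\<Sum>x\<in>X. marg lam e i x * exp (- \<eta> * \<delta> e x)))"
    using ln_Ze_shift_at_vertex[OF N lam'] by (simp add: sum.distrib)
  have sum_vertices: "(\<Sum>j\<in>V. ln (Zv lam' j)) = (\<Sum>j\<in>V. ln (Zv lam j))
      + ln (\<Sum>x\<in>X. mu_v lam i x * exp (\<eta> * (\<Sum>e\<in>N. \<delta> e x)))"
    using i finite_V by (simp add: ln_Zv_shift_at_vertex[OF N lam'] sum.distrib)
  show ?thesis using eta_pos by (simp add: dual_obj_def sum_vertices sum_edges field_simps)
qed

lemma bhattacharyya_pos: "0 < (\<Sum>x\<in>X. sqrt (marg lam e i x * mu_v lam i x))"
  using finite_X X_ne marg_pos mu_v_pos by (intro sum_pos) auto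

lemma slack_l1_sq_le_bhattacharyya:
  "(slack_l1 lam e i)\<^sup>2 \<le> 8 * (1 - (\<Sum>x\<in>X. sqrt (marg lam e i x * mu_v lam i x)))"
  unfolding slack_l1_def slack_def
  by (rule l1_dist_sq_le_bhattacharyya[OF finite_X])
     (auto intro: less_imp_le marg_pos mu_v_pos simp: sum_marg sum_mu_v)

theorem dual_obj_emp_update_ge:
  assumes e: "e \<in> E" and i: "i \<in> ends e"
  shows "dual_obj lam + (slack_l1 lam e i)\<^sup>2 / (4 * \<eta>) \<le> dual_obj (emp_update E X Cv Ce \<eta> (e, i) lam)"
proof -
  define S where "S = marg lam e i"
  define mu where "mu = mu_v lam i"
  define \<delta> where "\<delta> = (\<lambda>(e' :: edge) x. 1 / (2 * \<eta>) * ln (S x / mu x))"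
  define BC where "BC = (\<Sum>x\<in>X. sqrt (S x * mu x))"
  have S0: "x \<in> X \<Longrightarrow> S x > 0" for x unfolding S_def by (rule marg_pos)
  have mu0: "mu x > 0" for x unfolding mu_def by (rule mu_v_pos)
  have iV: "i \<in> V" using ends_subset_V[OF e] i by auto
  have N: "{e} \<subseteq> nbr E i" using e i by (simp add: mem_nbr_iff)
  have upd: "emp_update E X Cv Ce \<eta> (e, i) lam e' j x
      = lam e' j x + (if e' \<in> {e} \<and> j = i then \<delta> e' x else 0)" for e' j x
    by (simp add: emp_update_def \<delta>_def S_def mu_def)
  have half: "\<eta> * \<delta> e x = (ln (S x) - ln (mu x)) / 2" if "x \<in> X" for x
    using eta_pos S0[OF that] mu0[of x] by (simp add: \<delta>_def ln_div)
  have geo: "sqrt (S x * mu x) = exp ((ln (S x) + ln (mu x)) / 2)" if "x \<in> X" for x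
    using S0[OF that] mu0[of x] by (rule sqrt_mult_eq_exp_ln)
  have "(\<Sum>x\<in>X. mu x * exp (\<eta> * (\<Sum>e'\<in>{e}. \<delta> e' x))) = BC"
    unfolding BC_def
  proof (rule sum.cong[OF refl])
    fix x assume x: "x \<in> X"
    have "mu x * exp (\<eta> * \<delta> e x) = exp (ln (mu x)) * exp ((ln (S x) - ln (mu x)) / 2)"
      using mu0[of x] by (simp add: half[OF x])
    also have "\<dots> = sqrt (S x * mu x)"
      unfolding geo[OF x] exp_add[symmetric] by (simp add: field_simps)
    finally show "mu x * exp (\<eta> * (\<Sum>e'\<in>{e}. \<delta> e' x)) = sqrt (S x * mu x)" by simp
  qed
  moreover have "(\<Sum>x\<in>X. S x * exp (- \<eta> * \<delta> e x)) = BC"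
    unfolding BC_def
  proof (rule sum.cong[OF refl])
    fix x assume x: "x \<in> X"
    have "S x * exp (- \<eta> * \<delta> e x) = exp (ln (S x)) * exp (- ((ln (S x) - ln (mu x)) / 2))"
      using S0[OF x] by (simp add: half[OF x])
    also have "\<dots> = sqrt (S x * mu x)"
      unfolding geo[OF x] exp_add[symmetric] by (simp add: field_simps)
    finally show "S x * exp (- \<eta> * \<delta> e x) = sqrt (S x * mu x)" .
  qed
  ultimately have "dual_obj (emp_update E X Cv Ce \<eta> (e, i) lam) = dual_obj lam - 2 * ln BC / \<eta>"
    using dual_obj_shift_at_vertex[OF iV N upd] by (simp add: S_def mu_def)
  moreover have "(slack_l1 lam e i)\<^sup>2 \<le> - 8 * ln BC"
    using slack_l1_sq_le_bhattacharyya[of lam e i] ln_le_minus_one[OF bhattacharyya_pos[of lam e i]]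
    by (simp add: BC_def S_def mu_def)
  ultimately show ?thesis using eta_pos by (simp add: field_simps)
qed

lemma ln_mu_v_prod_marg:
  assumes "finite N" and "x \<in> X"
  shows "ln (mu_v lam i x * (\<Prod>e\<in>N. marg lam e i x)) = ln (mu_v lam i x) + (\<Sum>e\<in>N. ln (marg lam e i x))"
proof -
  have "(\<Prod>e\<in>N. marg lam e i x) > 0" using marg_pos[OF assms(2)] by (intro prod_pos) (auto intro: less_imp_le)
  moreover have "ln (\<Prod>e\<in>N. marg lam e i x) = (\<Sum>e\<in>N. ln (marg lam e i x))"
    using marg_pos[OF assms(2)] by (intro ln_prod[OF assms(1)]) (auto simp: less_imp_neq[symmetric])
  ultimately show ?thesis using mu_v_pos[of lam i x] by (simp add: ln_mult)
qed

lemma dual_obj_smp_update_eq: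
  fixes lam :: dual
  assumes i: "i \<in> V"
  defines "k \<equiv> real (card (nbr E i))"
    and "P \<equiv> \<lambda>x. mu_v lam i x * (\<Prod>e\<in>nbr E i. marg lam e i x)"
  shows "dual_obj (smp_update E X Cv Ce \<eta> i lam)
           = dual_obj lam - (k + 1) * ln (\<Sum>x\<in>X. exp (ln (P x) / (k + 1))) / \<eta>"
proof -
  define N where "N = nbr E i"
  define S where "S = (\<lambda>e. marg lam e i)"
  define mu where "mu = mu_v lam i"
  define \<delta> where "\<delta> = (\<lambda>e x. 1 / \<eta> * ln (S e x) - 1 / (\<eta> * (k + 1)) * ln (P x))"
  define T where "T = (\<Sum>x\<in>X. exp (ln (P x) / (k + 1)))"
  have k0: "k \<ge> 0" by (simp add: k_def)
  have lnP: "x \<in> X \<Longrightarrow> ln (P x) = ln (mu x) + (\<Sum>e\<in>N. ln (S e x))" for x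
    unfolding P_def mu_def S_def N_def by (rule ln_mu_v_prod_marg[OF finite_nbr])
  have upd: "smp_update E X Cv Ce \<eta> i lam e j x = lam e j x + (if e \<in> N \<and> j = i then \<delta> e x else 0)"
    for e j x
    by (simp add: smp_update_def \<delta>_def S_def P_def mu_def k_def N_def)
  have scaled: "\<eta> * \<delta> e x = ln (S e x) - ln (P x) / (k + 1)" for e x
  proof -
    have "\<eta> * \<delta> e x = \<eta> / \<eta> * ln (S e x) - \<eta> / (\<eta> * (k + 1)) * ln (P x)"
      by (simp add: \<delta>_def right_diff_distrib)
    then show ?thesis using eta_pos k0 by simp
  qed
  have "(\<Sum>x\<in>X. mu x * exp (\<eta> * (\<Sum>e\<in>N. \<delta> e x))) = T"
    unfolding T_def
  proof (rule sum.cong[OF refl])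
    fix x assume x: "x \<in> X"
    have "ln (mu x) + \<eta> * (\<Sum>e\<in>N. \<delta> e x) = ln (mu x) + (\<Sum>e\<in>N. ln (S e x)) - k * (ln (P x) / (k + 1))"
      by (simp add: sum_distrib_left scaled sum_subtractf k_def N_def)
    also have "\<dots> = ln (P x) / (k + 1)" using lnP[OF x] k0 by (simp add: field_simps)
    finally have "exp (ln (mu x) + \<eta> * (\<Sum>e\<in>N. \<delta> e x)) = exp (ln (P x) / (k + 1))" by simp
    then show "mu x * exp (\<eta> * (\<Sum>e\<in>N. \<delta> e x)) = exp (ln (P x) / (k + 1))"
      using mu_v_pos[of lam i x] by (simp add: mu_def exp_add)
  qed
  moreover have "(\<Sum>x\<in>X. S e x * exp (- \<eta> * \<delta> e x)) = T" for e
    unfolding T_def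
  proof (rule sum.cong[OF refl])
    fix x assume x: "x \<in> X"
    have "S e x * exp (- \<eta> * \<delta> e x) = exp (ln (S e x) - \<eta> * \<delta> e x)"
      using marg_pos[OF x] by (simp add: S_def exp_diff exp_minus field_simps)
    then show "S e x * exp (- \<eta> * \<delta> e x) = exp (ln (P x) / (k + 1))" by (simp add: scaled)
  qed
  ultimately show ?thesis
    using dual_obj_shift_at_vertex[where lam' = "smp_update E X Cv Ce \<eta> i lam" and N = N, OF i _ upd]
      eta_pos
    by (simp add: N_def S_def mu_def k_def T_def field_simps)
qed

lemma smp_log_factor_le:
  fixes lam :: dual
  assumes e0: "e0 \<in> nbr E i"
  defines "k \<equiv> real (card (nbr E i))"
    and "P \<equiv> \<lambda>x. mu_v lam i x * (\<Prod>e\<in>nbr E i. marg lam e i x)"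
  shows "(k + 1) * ln (\<Sum>x\<in>X. exp (ln (P x) / (k + 1))) \<le> - (slack_l1 lam e0 i)\<^sup>2 / 4"
proof -
  define N where "N = nbr E i"
  define S where "S = (\<lambda>e. marg lam e i)"
  define mu where "mu = mu_v lam i"
  define T where "T = (\<Sum>x\<in>X. exp (ln (P x) / (k + 1)))"
  define BC where "BC = (\<Sum>x\<in>X. sqrt (S e0 x * mu x))"
  have finN: "finite N" unfolding N_def by (rule finite_nbr)
  have e0N: "e0 \<in> N" using e0 by (simp add: N_def)
  have k0: "k \<ge> 0" by (simp add: k_def)
  have "exp (ln (P x) / (k + 1)) \<le> (2 * sqrt (S e0 x * mu x) + (\<Sum>e\<in>N - {e0}. S e x)) / (k + 1)"
    if x: "x \<in> X" for x
    using geometric_mean_le_pair_mean[OF finN e0N, of "\<lambda>e. S e x" "mu x"] marg_pos[OF x] mu_v_pos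
    by (simp add: P_def S_def mu_def N_def k_def ln_mu_v_prod_marg[OF finite_nbr x])
  then have "T \<le> (\<Sum>x\<in>X. (2 * sqrt (S e0 x * mu x) + (\<Sum>e\<in>N - {e0}. S e x)) / (k + 1))"
    unfolding T_def by (rule sum_mono)
  also have "\<dots> = (2 * BC + (\<Sum>e\<in>N - {e0}. \<Sum>x\<in>X. S e x)) / (k + 1)"
    by (simp add: BC_def sum_divide_distrib[symmetric] sum.distrib sum_distrib_left sum.swap[of _ "N - {e0}" X])
  also have "(\<Sum>e\<in>N - {e0}. \<Sum>x\<in>X. S e x) = k - 1"
  proof -
    have "card N \<ge> 1" using finN e0N by (metis One_nat_def Suc_leI card_gt_0_iff empty_iff)
    then show ?thesis
      using finN e0N by (simp add: S_def sum_marg k_def N_def card_Diff_singleton of_nat_diff)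
  qed
  finally have "(k + 1) * T \<le> 2 * BC + (k - 1)" using k0 by (simp add: field_simps)
  moreover have "(k + 1) * ln T \<le> (k + 1) * (T - 1)"
  proof -
    have "T > 0" unfolding T_def using finite_X X_ne by (intro sum_pos) auto
    then show ?thesis using ln_le_minus_one[of T] k0 by (intro mult_left_mono) auto
  qed
  moreover have "(slack_l1 lam e0 i)\<^sup>2 \<le> 8 * (1 - BC)"
    using slack_l1_sq_le_bhattacharyya by (simp add: BC_def S_def mu_def)
  ultimately show ?thesis by (simp add: T_def algebra_simps)
qed

theorem dual_obj_smp_update_ge:
  assumes "i \<in> V" and "e0 \<in> nbr E i"
  shows "dual_obj lam + (slack_l1 lam e0 i)\<^sup>2 / (4 * \<eta>) \<le> dual_obj (smp_update E X Cv Ce \<eta> i lam)"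
  using dual_obj_smp_update_eq[OF assms(1), of lam] smp_log_factor_le[OF assms(2), of lam] eta_pos
  by (simp add: field_simps)

section \<open>Expected improvement under the block distributions\<close>

lemma mean_block_progress:
  "(\<Sum>e\<in>E. \<Sum>i\<in>ends e. dual_obj lam + (slack_l1 lam e i)\<^sup>2 / (4 * \<eta>)) / (2 * real (card E))
     = dual_obj lam + 1 / (8 * real (card E) * \<eta>) * slack_sq lam"
proof -
  have "(\<Sum>e\<in>E. \<Sum>i\<in>ends e. dual_obj lam + (slack_l1 lam e i)\<^sup>2 / (4 * \<eta>))
      = 2 * real (card E) * dual_obj lam + slack_sq lam / (4 * \<eta>)"
    by (simp add: slack_sq_eq sum.distrib card_ends sum_divide_distrib)
  then show ?thesis using card_E_ge_1 eta_pos by (simp add: field_simps)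
qed

lemma emp_blocks_eq: "emp_blocks E = pmf_of_set (Sigma E ends)"
  unfolding emp_blocks_def by (rule arg_cong[where f = pmf_of_set]) auto

lemma Sigma_ends_props: "finite (Sigma E ends)" "Sigma E ends \<noteq> {}"
  "real (card (Sigma E ends)) = 2 * real (card E)"
proof -
  show "finite (Sigma E ends)" using finite_E by (simp add: ends_def)
  obtain e where "e \<in> E" using E_ne by auto
  then have "(e, fst e) \<in> Sigma E ends" by (simp add: ends_def)
  then show "Sigma E ends \<noteq> {}" by blast
  have "card (Sigma E ends) = (\<Sum>e\<in>E. card (ends e))"
    by (rule card_SigmaI) (use finite_E in \<open>auto simp: ends_def\<close>)
  then show "real (card (Sigma E ends)) = 2 * real (card E)" by (simp add: card_ends)
qed

lemma finite_set_emp_blocks: "finite (set_pmf (emp_blocks E))"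
  using Sigma_ends_props by (simp add: emp_blocks_eq)

theorem expected_dual_obj_emp_ge:
  "dual_obj lam + 1 / (8 * real (card E) * \<eta>) * slack_sq lam
     \<le> measure_pmf.expectation (emp_blocks E) (\<lambda>b. dual_obj (emp_update E X Cv Ce \<eta> b lam))"
proof -
  have "(\<Sum>e\<in>E. \<Sum>i\<in>ends e. dual_obj lam + (slack_l1 lam e i)\<^sup>2 / (4 * \<eta>))
      \<le> (\<Sum>e\<in>E. \<Sum>i\<in>ends e. dual_obj (emp_update E X Cv Ce \<eta> (e, i) lam))"
    using dual_obj_emp_update_ge by (intro sum_mono) auto
  also have "\<dots> = (\<Sum>b\<in>Sigma E ends. dual_obj (emp_update E X Cv Ce \<eta> b lam))"
    using finite_E by (subst sum.Sigma) (auto simp: ends_def split_beta)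
  finally show ?thesis
    unfolding mean_block_progress[symmetric] emp_blocks_eq
      integral_pmf_of_set[OF Sigma_ends_props(2,1)] Sigma_ends_props(3)
    using card_E_ge_1 by (simp add: divide_right_mono)
qed

lemma pmf_smp_blocks:
  "pmf (smp_blocks V E) i = (if i \<in> V then real (card (nbr E i)) / (2 * real (card E)) else 0)"
proof -
  define w where "w = (\<lambda>i. if i \<in> V then real (card (nbr E i)) / (2 * real (card E)) else 0)"
  have w0: "0 \<le> w i" for i by (simp add: w_def)
  have "(\<integral>\<^sup>+i. ennreal (w i) \<partial>count_space UNIV) = (\<integral>\<^sup>+i. ennreal (w i) \<partial>count_space V)"
    by (subst nn_integral_count_space_indicator)
       (auto intro!: nn_integral_cong simp: w_def split: split_indicator)
  also have "\<dots> = (\<Sum>i\<in>V. ennreal (w i))" by (rule nn_integral_count_space_finite[OF finite_V])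
  also have "\<dots> = ennreal (\<Sum>i\<in>V. w i)" using w0 by (simp add: sum_ennreal)
  also have "(\<Sum>i\<in>V. w i) = 1"
    using sum_card_nbr card_E_ge_1 by (simp add: w_def sum_divide_distrib[symmetric])
  finally have "(\<integral>\<^sup>+i. ennreal (w i) \<partial>count_space UNIV) = 1" by simp
  then have "pmf (embed_pmf w) i = w i" by (rule pmf_embed_pmf[OF w0])
  moreover have "smp_blocks V E = embed_pmf w"
    unfolding smp_blocks_def sum_card_nbr w_def ..
  ultimately show ?thesis by (simp add: w_def)
qed

lemma finite_set_smp_blocks: "finite (set_pmf (smp_blocks V E))"
  using finite_V by (rule finite_subset[rotated]) (auto simp: set_pmf_eq pmf_smp_blocks)

theorem expected_dual_obj_smp_ge:
  "dual_obj lam + 1 / (8 * real (card E) * \<eta>) * slack_sq lam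
     \<le> measure_pmf.expectation (smp_blocks V E) (\<lambda>i. dual_obj (smp_update E X Cv Ce \<eta> i lam))"
proof -
  have "(\<Sum>e\<in>E. \<Sum>i\<in>ends e. dual_obj lam + (slack_l1 lam e i)\<^sup>2 / (4 * \<eta>))
      = (\<Sum>i\<in>V. \<Sum>e\<in>nbr E i. dual_obj lam + (slack_l1 lam e i)\<^sup>2 / (4 * \<eta>))"
    by (rule sum_nbr_eq_sum_ends[symmetric])
  also have "\<dots> \<le> (\<Sum>i\<in>V. real (card (nbr E i)) * dual_obj (smp_update E X Cv Ce \<eta> i lam))"
    using dual_obj_smp_update_ge by (intro sum_mono sum_bounded_above) auto
  finally have "(\<Sum>e\<in>E. \<Sum>i\<in>ends e. dual_obj lam + (slack_l1 lam e i)\<^sup>2 / (4 * \<eta>)) / (2 * real (card E))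
      \<le> (\<Sum>i\<in>V. real (card (nbr E i)) * dual_obj (smp_update E X Cv Ce \<eta> i lam)) / (2 * real (card E))"
    using card_E_ge_1 by (intro divide_right_mono) auto
  also have "\<dots> = measure_pmf.expectation (smp_blocks V E) (\<lambda>i. dual_obj (smp_update E X Cv Ce \<eta> i lam))"
    by (subst integral_measure_pmf[of V])
       (auto simp: finite_V pmf_smp_blocks set_pmf_eq sum_divide_distrib split: if_splits)
  finally show ?thesis unfolding mean_block_progress .
qed

section \<open>The guarantee for a generic update rule\<close>

lemma expected_selected_slack_sq_le:
  fixes upd :: "'b \<Rightarrow> dual \<Rightarrow> dual" and p :: "'b pmf" and sel :: "'b list \<Rightarrow> nat"
  assumes fp: "finite (set_pmf p)"
    and progress: "\<And>lam. dual_obj lam + 1 / (8 * real (card E) * \<eta>) * slack_sq lam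
                     \<le> measure_pmf.expectation p (\<lambda>b. dual_obj (upd b lam))"
    and m: "mu \<in> L2 V E X" and K0: "K > 0"
    and sel: "\<And>bs k. k \<le> K \<Longrightarrow> slack_sq (run upd bs (sel bs)) \<le> slack_sq (run upd bs k)"
  shows "measure_pmf.expectation (seq_pmf K p) (\<lambda>bs. slack_sq (run upd bs (sel bs)))
           \<le> 8 * real (card E) * \<eta> * (primal mu - dual_obj (\<lambda>_ _ _. 0)) / real K"
proof -
  have fK: "finite (set_pmf (seq_pmf K p))" using fp by (rule finite_set_seq_pmf)
  have \<kappa>: "1 / (8 * real (card E) * \<eta>) > 0" using card_E_ge_1 eta_pos by simp
  have min_le_mean: "slack_sq (run upd bs (sel bs))
      \<le> (\<Sum>k<K. slack_sq (run_from upd (\<lambda>_ _ _. 0) bs k)) / real K" for bs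
  proof -
    have "(\<Sum>k<K. slack_sq (run upd bs (sel bs))) \<le> (\<Sum>k<K. slack_sq (run_from upd (\<lambda>_ _ _. 0) bs k))"
      using sel by (intro sum_mono) (simp add: run_eq_run_from)
    then show ?thesis using K0 by (simp add: field_simps)
  qed
  have "measure_pmf.expectation (seq_pmf K p) (\<lambda>bs. slack_sq (run upd bs (sel bs)))
      \<le> measure_pmf.expectation (seq_pmf K p)
           (\<lambda>bs. (\<Sum>k<K. slack_sq (run_from upd (\<lambda>_ _ _. 0) bs k)) / real K)"
    using min_le_mean by (rule expectation_mono_finite_pmf[OF fK])
  also have "\<dots> = measure_pmf.expectation (seq_pmf K p)
           (\<lambda>bs. \<Sum>k<K. slack_sq (run_from upd (\<lambda>_ _ _. 0) bs k)) / real K"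
    by (simp add: integrable_measure_pmf_finite[OF fK])
  also have "\<dots> \<le> (primal mu - dual_obj (\<lambda>_ _ _. 0)) / (1 / (8 * real (card E) * \<eta>)) / real K"
    using expected_sum_le_of_expected_progress[where F = dual_obj and Q = slack_sq and G = "primal mu",
        OF fp \<kappa> weak_duality[OF m] progress] K0
    by (intro divide_right_mono) auto
  finally show ?thesis by (simp add: mult.commute)
qed

lemma duality_gap_at_zero_le:
  assumes "mu \<in> L2 V E X"
  shows "primal mu - dual_obj (\<lambda>_ _ _. 0)
           \<le> 2 * ((real (card V) + real (card E)) * Cmax) + (real (card V) + 2 * real (card E)) * ln d / \<eta>"
proof -
  have "dual_obj (\<lambda>_ _ _. 0) = primal (gibbs (\<lambda>_ _ _. 0)) + neg_entropy (gibbs (\<lambda>_ _ _. 0)) / \<eta>"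
    by (simp add: lagrangian_gibbs[symmetric] lagrangian_def)
  moreover have "\<bar>primal (gibbs (\<lambda>_ _ _. 0))\<bar> \<le> (real (card V) + real (card E)) * Cmax"
    and "\<bar>primal mu\<bar> \<le> (real (card V) + real (card E)) * Cmax"
    using abs_primal_le prob_tables_gibbs L2_imp_prob_tables[OF assms] by blast+
  moreover have "- neg_entropy (gibbs (\<lambda>_ _ _. 0)) / \<eta> \<le> (real (card V) + 2 * real (card E)) * ln d / \<eta>"
    using divide_right_mono[OF neg_entropy_ge[OF prob_tables_gibbs], of \<eta>] eta_pos by simp
  ultimately show ?thesis by (simp add: abs_le_iff)
qed

lemma expected_primal_Proj_le:
  fixes q :: "'c pmf" and lam :: "'c \<Rightarrow> dual"
  assumes fq: "finite (set_pmf q)" and m: "mu \<in> L2 V E X" and s: "s > 0"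
    and small: "measure_pmf.expectation q (\<lambda>c. slack_sq (lam c)) \<le> s\<^sup>2"
  defines "A \<equiv> 2 * d * (real (card V) + real (card E)) + 6 * real (card E)"
  shows "measure_pmf.expectation q (\<lambda>c. primal (Proj E X Cv Ce \<eta> (lam c)))
     \<le> primal mu + (real (card V) + 2 * real (card E)) * ln d / \<eta> + Cmax * A * s"
proof -
  have "measure_pmf.expectation q (\<lambda>c. primal (Proj E X Cv Ce \<eta> (lam c)))
      \<le> measure_pmf.expectation q (\<lambda>c. primal mu + (real (card V) + 2 * real (card E)) * ln d / \<eta>
           + Cmax * A * s / 2 + Cmax * A / (2 * s) * slack_sq (lam c))"
  proof (rule expectation_mono_finite_pmf[OF fq])
    fix c
    have "Cmax * A * ((slack_sq (lam c) / s + s) / 2) = Cmax * A * s / 2 + Cmax * A / (2 * s) * slack_sq (lam c)"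
      using s by (simp add: field_simps)
    then show "primal (Proj E X Cv Ce \<eta> (lam c)) \<le> primal mu + (real (card V) + 2 * real (card E)) * ln d / \<eta>
        + Cmax * A * s / 2 + Cmax * A / (2 * s) * slack_sq (lam c)"
      using primal_Proj_le_slack_sq[OF m s, of "lam c", folded A_def] by linarith
  qed
  also have "\<dots> = primal mu + (real (card V) + 2 * real (card E)) * ln d / \<eta>
       + Cmax * A * s / 2 + Cmax * A / (2 * s) * measure_pmf.expectation q (\<lambda>c. slack_sq (lam c))"
    by (simp add: integrable_measure_pmf_finite[OF fq])
  also have "\<dots> \<le> primal mu + (real (card V) + 2 * real (card E)) * ln d / \<eta>
       + Cmax * A * s / 2 + Cmax * A / (2 * s) * s\<^sup>2"
    using small s Cmax_nonneg d_pos by (intro add_left_mono mult_left_mono) (simp_all add: A_def)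
  also have "\<dots> = primal mu + (real (card V) + 2 * real (card E)) * ln d / \<eta> + Cmax * A * s"
    using s by (simp add: field_simps power2_eq_square)
  finally show ?thesis .
qed

lemma expected_primal_Proj_le_trivial:
  fixes q :: "'c pmf" and lam :: "'c \<Rightarrow> dual"
  assumes fq: "finite (set_pmf q)" and m: "mu \<in> L2 V E X"
  shows "measure_pmf.expectation q (\<lambda>c. primal (Proj E X Cv Ce \<eta> (lam c)))
           \<le> primal mu + 2 * ((real (card V) + real (card E)) * Cmax)"
proof -
  have "primal (Proj E X Cv Ce \<eta> (lam c)) \<le> primal mu + 2 * ((real (card V) + real (card E)) * Cmax)" for c
    using abs_primal_le[OF L2_imp_prob_tables[OF Proj_in_L2[of "lam c"]]]
      abs_primal_le[OF L2_imp_prob_tables[OF m]]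
    by (simp add: abs_le_iff)
  then show ?thesis
    using expectation_mono_finite_pmf[OF fq, of _ "\<lambda>_. primal mu + 2 * ((real (card V) + real (card E)) * Cmax)"]
    by simp
qed

theorem rmp_guarantee_of_expected_progress:
  fixes upd :: "'b \<Rightarrow> dual \<Rightarrow> dual" and p :: "'b pmf" and K :: nat
  assumes fp: "finite (set_pmf p)"
    and progress: "\<And>lam. dual_obj lam + 1 / (8 * real (card E) * \<eta>) * slack_sq lam
                     \<le> measure_pmf.expectation p (\<lambda>b. dual_obj (upd b lam))"
    and \<epsilon>: "\<epsilon> > 0" and \<eta>_eq: "\<eta> = 4 * real (card E + card V) * ln d / \<epsilon>"
    and K: "real K \<ge> 9600 * real (card E) * d ^ 2 * real (card E + card V) ^ 4 * Cmax ^ 3 / \<epsilon> ^ 3 * ln d"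
  shows "rmp_guarantee V E X Cv Ce \<eta> \<epsilon> K upd p"
  unfolding rmp_guarantee_def
proof (intro allI impI conjI ballI)
  fix sel :: "'b list \<Rightarrow> nat" and bs
  show "Proj E X Cv Ce \<eta> (run upd bs (sel bs)) \<in> L2 V E X" by (rule Proj_in_L2)
next
  fix sel :: "'b list \<Rightarrow> nat" and mu
  assume sel: "\<forall>bs. sel bs \<le> K \<and> (\<forall>k\<le>K. slack_sq (run upd bs (sel bs)) \<le> slack_sq (run upd bs k))"
    and m: "mu \<in> L2 V E X"
  define nm where "nm = real (card V) + real (card E)"
  define A where "A = 2 * d * nm + 6 * real (card E)"
  have fK: "finite (set_pmf (seq_pmf K p))" using fp by (rule finite_set_seq_pmf)
  have "ln d > 0" using card_X by simp
  have entropy_le: "(real (card V) + 2 * real (card E)) * ln d / \<eta> \<le> \<epsilon> / 2"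
    using \<open>ln d > 0\<close> \<epsilon> eta_pos by (simp add: \<eta>_eq field_simps)
  show "measure_pmf.expectation (seq_pmf K p) (\<lambda>bs. primal (Proj E X Cv Ce \<eta> (run upd bs (sel bs))))
      \<le> primal mu + \<epsilon>"
  proof (cases "\<epsilon> \<ge> 2 * (nm * Cmax)")
    case True
    then show ?thesis
      using expected_primal_Proj_le_trivial[OF fK m, of "\<lambda>bs. run upd bs (sel bs)"] by (simp add: nm_def)
  next
    case False
    then have C: "Cmax > 0" using Cmax_nonneg \<epsilon> by (cases "Cmax = 0") auto
    have A0: "A > 0" using card_E_ge_1 d_pos by (simp add: A_def nm_def add_nonneg_pos)
    define s where "s = \<epsilon> / (2 * Cmax * A)"
    have s: "s > 0" using \<epsilon> C A0 by (simp add: s_def)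
    have "0 < 9600 * real (card E) * d ^ 2 * real (card E + card V) ^ 4 * Cmax ^ 3 / \<epsilon> ^ 3 * ln d"
      using card_E_ge_1 d_pos C \<epsilon> \<open>ln d > 0\<close> by (intro mult_pos_pos divide_pos_pos) auto
    then have K0: "K > 0" using K by linarith
    have gap: "primal mu - dual_obj (\<lambda>_ _ _. 0) \<le> 3 * (nm * Cmax)"
      using duality_gap_at_zero_le[OF m] entropy_le False unfolding nm_def by linarith
    have "measure_pmf.expectation (seq_pmf K p) (\<lambda>bs. slack_sq (run upd bs (sel bs)))
        \<le> 8 * real (card E) * \<eta> * (primal mu - dual_obj (\<lambda>_ _ _. 0)) / real K"
      using sel by (intro expected_selected_slack_sq_le[OF fp progress m K0]) auto
    also have "\<dots> \<le> 8 * real (card E) * \<eta> * (3 * (nm * Cmax)) / real K"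
      using gap eta_pos card_E_ge_1 by (intro divide_right_mono mult_left_mono) auto
    also have "\<dots> = 24 * real (card E) * (4 * (real (card E) + real (card V)) * ln d / \<epsilon>)
        * (real (card E) + real (card V)) * Cmax / real K"
      by (simp add: \<eta>_eq nm_def algebra_simps)
    also have "\<dots> \<le> (\<epsilon> / (2 * Cmax * (2 * d * (real (card E) + real (card V)) + 6 * real (card E))))\<^sup>2"
      by (rule iteration_count_arith) (use card_E_ge_1 card_X \<open>ln d > 0\<close> C \<epsilon> K in auto)
    also have "\<dots> = s\<^sup>2" by (simp add: s_def A_def nm_def add.commute)
    finally have small: "measure_pmf.expectation (seq_pmf K p) (\<lambda>bs. slack_sq (run upd bs (sel bs))) \<le> s\<^sup>2" .
    have "Cmax * A * s = \<epsilon> / 2" using C A0 by (simp add: s_def)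
    then show ?thesis
      using expected_primal_Proj_le[OF fK m s small, folded nm_def, folded A_def] entropy_le by linarith
  qed
qed

end

theorem theorem1:
  shows "\<exists>c::real. c > 0 \<and>
    (\<forall>(V::nat set) (E::edge set) (X::nat set) (Cv::nat \<Rightarrow> nat \<Rightarrow> real)
       (Ce::edge \<Rightarrow> nat \<Rightarrow> nat \<Rightarrow> real) (\<epsilon>::real) (K::nat).
       graph V E \<and> finite X \<and> card X \<ge> 2 \<and> \<epsilon> > 0
       \<and> real K \<ge> c * real (card E) * real (card X) ^ 2 * real (card E + card V) ^ 4
                    * Cnorm V E X Cv Ce ^ 3 / \<epsilon> ^ 3 * ln (real (card X))
       \<longrightarrow> (let \<eta> = 4 * real (card E + card V) * ln (real (card X)) / \<epsilon> in
             rmp_guarantee V E X Cv Ce \<eta> \<epsilon> K (emp_update E X Cv Ce \<eta>) (emp_blocks E)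
           \<and> rmp_guarantee V E X Cv Ce \<eta> \<epsilon> K (smp_update E X Cv Ce \<eta>) (smp_blocks V E)))"
proof (rule exI[of _ 9600], intro conjI allI impI)
  fix V :: "nat set" and E :: "edge set" and X :: "nat set" and Cv :: "nat \<Rightarrow> nat \<Rightarrow> real"
    and Ce :: "edge \<Rightarrow> nat \<Rightarrow> nat \<Rightarrow> real" and \<epsilon> :: real and K :: nat
  assume h: "graph V E \<and> finite X \<and> card X \<ge> 2 \<and> \<epsilon> > 0
       \<and> real K \<ge> 9600 * real (card E) * real (card X) ^ 2 * real (card E + card V) ^ 4
                    * Cnorm V E X Cv Ce ^ 3 / \<epsilon> ^ 3 * ln (real (card X))"
  define \<eta> where "\<eta> = 4 * real (card E + card V) * ln (real (card X)) / \<epsilon>"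
  have "card V > 0" using h by (simp add: graph_def card_gt_0_iff)
  then have "\<eta> > 0" using h by (simp add: \<eta>_def add_pos_nonneg)
  then interpret pairwise_mrf V E X Cv Ce \<eta> using h by unfold_locales auto
  have \<epsilon>: "\<epsilon> > 0" and K: "real K \<ge> 9600 * real (card E) * d ^ 2 * real (card E + card V) ^ 4
                                    * Cmax ^ 3 / \<epsilon> ^ 3 * ln d"
    using h by simp_all
  show "let \<eta> = 4 * real (card E + card V) * ln (real (card X)) / \<epsilon> in
          rmp_guarantee V E X Cv Ce \<eta> \<epsilon> K (emp_update E X Cv Ce \<eta>) (emp_blocks E)
        \<and> rmp_guarantee V E X Cv Ce \<eta> \<epsilon> K (smp_update E X Cv Ce \<eta>) (smp_blocks V E)"
    unfolding Let_def \<eta>_def[symmetric]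
    using rmp_guarantee_of_expected_progress[OF finite_set_emp_blocks expected_dual_obj_emp_ge \<epsilon> \<eta>_def K]
      rmp_guarantee_of_expected_progress[OF finite_set_smp_blocks expected_dual_obj_smp_ge \<epsilon> \<eta>_def K]
    by blast
qed (simp)

end
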